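(* Let $D>1$ be a square-free integer with $-D\equiv 2$ or $3\pmod 4$, and suppose $C(-4D)\cong(\mathbb{Z}/2\mathbb{Z})^n$ for some $n\ge 0$. Let $c=p_1^{n_1}\cdots p_k^{n_k}$ with distinct primes $p_i$ and $n_i\ge1$. Then there is a normalized solution to $x^2+Dy^2=z^2$ of the form $(a,b,c)$ if and only if all $p_i\in S$. Further, if all $p_i\in S$, there are exactly $2^{k-1}$ normalized solutions of the form $(a,b,c)$.
   Context: $S:=\{\text{odd primes } q : \left(\frac{-D}{q}\right)=1\}$, with $\left(\frac{\cdot}{q}\right)$ the Legendre symbol. A normalized solution of $x^2+Dy^2=z^2$ is a triple $(a,b,c)$ of natural numbers with $a^2+Db^2=c^2$ and $\gcd(a,b,c)=1$. $C(-4D)$ is the form class group of discriminant $-4D$ (classes of primitive positive-definite binary quadratic forms of discriminant $-4D$ under $\mathrm{SL}_2(\mathbb{Z})$-equivalence, with Dirichlet composition). *)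

theory Defs
  imports "HOL-Number_Theory.Number_Theory" "HOL-Computational_Algebra.Squarefree" "HOL-Algebra.Product_Groups" "HOL-Algebra.Elementary_Groups"
begin

type_synonym qform = "int \<times> int \<times> int"

definition qf_eval :: "qform \<Rightarrow> int \<Rightarrow> int \<Rightarrow> int" where
  "qf_eval f x y = (case f of (a, b, c) \<Rightarrow> a * x^2 + b * x * y + c * y^2)"

definition qf_disc :: "qform \<Rightarrow> int" where
  "qf_disc f = (case f of (a, b, c) \<Rightarrow> b^2 - 4 * a * c)"

definition ppd_forms :: "int \<Rightarrow> qform set" where
  "ppd_forms dd = {f. qf_disc f = dd \<and> dd < 0 \<and> fst f > 0 \<and>
     gcd (fst f) (gcd (fst (snd f)) (snd (snd f))) = 1}"

definition sl2_equiv :: "qform \<Rightarrow> qform \<Rightarrow> bool" where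
  "sl2_equiv f g \<longleftrightarrow> (\<exists>p q r s :: int. p * s - q * r = 1 \<and>
      (\<forall>x y. qf_eval g x y = qf_eval f (p * x + q * y) (r * x + s * y)))"

definition sl2_rel :: "int \<Rightarrow> (qform \<times> qform) set" where
  "sl2_rel dd = {(f, g). f \<in> ppd_forms dd \<and> g \<in> ppd_forms dd \<and> sl2_equiv f g}"

definition dirichlet_ok :: "int \<Rightarrow> qform \<Rightarrow> qform \<Rightarrow> int \<Rightarrow> bool" where
  "dirichlet_ok dd f g B \<longleftrightarrow> (case f of (a1, b1, c1) \<Rightarrow> case g of (a2, b2, c2) \<Rightarrow>
      gcd a1 (gcd a2 ((b1 + b2) div 2)) = 1 \<and>
      [B = b1] (mod 2 * a1) \<and> [B = b2] (mod 2 * a2) \<and> [B^2 = dd] (mod 4 * a1 * a2))"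

definition dirichlet_comp :: "int \<Rightarrow> qform \<Rightarrow> qform \<Rightarrow> int \<Rightarrow> qform" where
  "dirichlet_comp dd f g B = (case f of (a1, b1, c1) \<Rightarrow> case g of (a2, b2, c2) \<Rightarrow>
      (a1 * a2, B, (B^2 - dd) div (4 * a1 * a2)))"

text \<open>The form class group C(Delta): classes of primitive positive definite forms of
  discriminant Delta under SL_2(Z)-equivalence, with Dirichlet composition; the identity
  is the class of the principal form.\<close>
definition form_class_group :: "int \<Rightarrow> qform set monoid" where
  "form_class_group dd =
     \<lparr> carrier = ppd_forms dd // sl2_rel dd,
       monoid.mult = (\<lambda>U V. SOME W. W \<in> ppd_forms dd // sl2_rel dd \<and>
           (\<exists>f\<in>U. \<exists>g\<in>V. \<exists>B. dirichlet_ok dd f g B \<and> dirichlet_comp dd f g B \<in> W)),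
       one = sl2_rel dd `` {(1, if dd mod 4 = 0 then 0 else 1,
                               if dd mod 4 = 0 then - dd div 4 else (1 - dd) div 4)} \<rparr>"

definition Z2_power :: "nat \<Rightarrow> (nat \<Rightarrow> int) monoid" where
  "Z2_power n = product_group {..<n} (\<lambda>_. integer_mod_group 2)"

definition S_set :: "int \<Rightarrow> nat set" where
  "S_set D = {q. prime q \<and> odd q \<and> Legendre (- D) (int q) = 1}"

definition normalized_sol :: "int \<Rightarrow> nat \<Rightarrow> nat \<Rightarrow> nat \<Rightarrow> bool" where
  "normalized_sol D a b c \<longleftrightarrow> a > 0 \<and> b > 0 \<and> c > 0 \<and>
     int a ^ 2 + D * int b ^ 2 = int c ^ 2 \<and> gcd a (gcd b c) = 1"

end

theory Submission
  imports Defs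
begin

text \<open>
  A normalized solution (a, b, c) gives the two coprime representations (\<plusminus>a, b) of c^2 by
  x^2 + D y^2 with y > 0, and these correspond bijectively to the square roots t of -D
  modulo c^2 via c^2 | x + t y. Every root does come from a representation: t gives a form
  (c, 2t, _) whose Dirichlet square (c^2, 2t, _) lies in the principal class because the class
  group is 2-torsion, so its ideal (c^2, t - \<surd>-D) of \<int>[\<surd>-D] is principal, and a generator
  x + y\<surd>-D has norm c^2. By Hensel lifting and the Chinese remainder theorem there are
  2^k such roots when all p_i lie in S. Conversely, reducing a^2 + D b^2 = c^2 modulo p_i
  shows that -D is a nonzero square modulo the odd prime p_i.
\<close>

section \<open>Arithmetic in \<int>[\<surd>-D] and ideal classes\<close>

\<comment> \<open>A pair (x, y) stands for x + y\<surd>-D.\<close>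
definition zd_mult :: "int \<Rightarrow> int \<times> int \<Rightarrow> int \<times> int \<Rightarrow> int \<times> int" where
  "zd_mult D z w = (fst z * fst w - D * snd z * snd w, fst z * snd w + fst w * snd z)"

definition zd_norm :: "int \<Rightarrow> int \<times> int \<Rightarrow> int" where
  "zd_norm D z = (fst z)^2 + D * (snd z)^2"

lemma zd_mult_commute: "zd_mult D z w = zd_mult D w z"
  by (simp add: zd_mult_def algebra_simps)

lemma zd_mult_assoc: "zd_mult D (zd_mult D x y) z = zd_mult D x (zd_mult D y z)"
  by (simp add: zd_mult_def algebra_simps)

lemma zd_mult_one [simp]: "zd_mult D (1,0) z = z" "zd_mult D z (1,0) = z"
  by (auto simp: zd_mult_def)

lemma zd_norm_mult: "zd_norm D (zd_mult D z w) = zd_norm D z * zd_norm D w"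
  by (simp add: zd_mult_def zd_norm_def power2_eq_square algebra_simps)

lemma zd_norm_nonneg: "D > 0 \<Longrightarrow> zd_norm D z \<ge> 0"
  by (simp add: zd_norm_def)

lemma zd_norm_eq_0_iff: "D > 0 \<Longrightarrow> zd_norm D z = 0 \<longleftrightarrow> z = (0,0)"
  by (cases z) (auto simp: zd_norm_def add_nonneg_eq_0_iff)

lemma zd_mult_eq_0_iff: "D > 0 \<Longrightarrow> zd_mult D z w = (0,0) \<longleftrightarrow> z = (0,0) \<or> w = (0,0)"
  by (metis zd_norm_eq_0_iff zd_norm_mult mult_eq_0_iff)

lemma zd_mult_left_cancel:
  assumes "D > 0" "\<alpha> \<noteq> (0,0)" "zd_mult D \<alpha> z = zd_mult D \<alpha> w"
  shows "z = w"
proof -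
  have "zd_mult D \<alpha> (fst z - fst w, snd z - snd w) = (0,0)"
    using assms(3) by (simp add: zd_mult_def algebra_simps)
  then show ?thesis
    using assms(1,2) zd_mult_eq_0_iff by (cases z, cases w) auto
qed

lemma image_zd_mult_image: "zd_mult D \<alpha> ` zd_mult D \<beta> ` I = zd_mult D (zd_mult D \<alpha> \<beta>) ` I"
  by (simp add: image_image zd_mult_assoc)

definition ideal_equiv :: "int \<Rightarrow> (int \<times> int) set \<Rightarrow> (int \<times> int) set \<Rightarrow> bool" where
  "ideal_equiv D I J \<longleftrightarrow>
     (\<exists>\<alpha> \<beta>. \<alpha> \<noteq> (0,0) \<and> \<beta> \<noteq> (0,0) \<and> zd_mult D \<alpha> ` I = zd_mult D \<beta> ` J)"

lemma ideal_equiv_sym: "ideal_equiv D I J \<Longrightarrow> ideal_equiv D J I"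
  unfolding ideal_equiv_def by metis

lemma ideal_equiv_trans:
  assumes "D > 0" "ideal_equiv D I J" "ideal_equiv D J K"
  shows "ideal_equiv D I K"
proof -
  obtain \<alpha> \<beta> where \<alpha>\<beta>: "\<alpha> \<noteq> (0,0)" "\<beta> \<noteq> (0,0)" "zd_mult D \<alpha> ` I = zd_mult D \<beta> ` J"
    using assms(2) ideal_equiv_def by metis
  obtain \<gamma> \<delta> where \<gamma>\<delta>: "\<gamma> \<noteq> (0,0)" "\<delta> \<noteq> (0,0)" "zd_mult D \<gamma> ` J = zd_mult D \<delta> ` K"
    using assms(3) ideal_equiv_def by metis
  have "zd_mult D (zd_mult D \<gamma> \<alpha>) ` I = zd_mult D (zd_mult D \<beta> \<gamma>) ` J"
    by (metis \<alpha>\<beta>(3) image_zd_mult_image zd_mult_commute)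
  also have "\<dots> = zd_mult D (zd_mult D \<beta> \<delta>) ` K"
    by (metis \<gamma>\<delta>(3) image_zd_mult_image)
  finally show ?thesis
    unfolding ideal_equiv_def using assms(1) \<alpha>\<beta> \<gamma>\<delta> zd_mult_eq_0_iff by metis
qed

inductive_set ideal_prod :: "int \<Rightarrow> (int \<times> int) set \<Rightarrow> (int \<times> int) set \<Rightarrow> (int \<times> int) set"
  for D I J where
  mult: "x \<in> I \<Longrightarrow> y \<in> J \<Longrightarrow> zd_mult D x y \<in> ideal_prod D I J"
| zero: "(0,0) \<in> ideal_prod D I J"
| add: "z \<in> ideal_prod D I J \<Longrightarrow> w \<in> ideal_prod D I J \<Longrightarrow>
          (fst z + fst w, snd z + snd w) \<in> ideal_prod D I J"
| uminus: "z \<in> ideal_prod D I J \<Longrightarrow> (- fst z, - snd z) \<in> ideal_prod D I J"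

lemma ideal_prod_commute: "ideal_prod D I J = ideal_prod D J I"
proof -
  have "z \<in> ideal_prod D J I" if "z \<in> ideal_prod D I J" for z I J
    using that
  proof induct
    case (mult x y)
    then show ?case by (metis ideal_prod.mult zd_mult_commute)
  qed (auto intro: ideal_prod.intros)
  then show ?thesis by blast
qed

lemma ideal_prod_smult:
  assumes "z \<in> ideal_prod D I J"
  shows "(k * fst z, k * snd z) \<in> ideal_prod D I J"
proof -
  have nat: "(int n * fst z, int n * snd z) \<in> ideal_prod D I J" for n
  proof (induction n)
    case 0
    then show ?case using ideal_prod.zero by simp
  next
    case (Suc n)
    then show ?case using ideal_prod.add[OF assms Suc.IH] by (simp add: algebra_simps)
  qed
  show ?thesis
  proof (cases "k \<ge> 0")
    case True
    then show ?thesis using nat[of "nat k"] by simp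
  next
    case False
    then show ?thesis using ideal_prod.uminus[OF nat[of "nat (- k)"]] by simp
  qed
qed

lemma ideal_prod_lin_comb:
  assumes "(x1, y1) \<in> ideal_prod D I J" "(x2, y2) \<in> ideal_prod D I J"
    and "z = (m * x1 + n * x2, m * y1 + n * y2)"
  shows "z \<in> ideal_prod D I J"
  using ideal_prod.add[OF ideal_prod_smult[OF assms(1), of m] ideal_prod_smult[OF assms(2), of n]]
  by (simp add: assms(3))

lemma image_zd_mult_ideal_prod_subset:
  "zd_mult D \<alpha> ` ideal_prod D I J \<subseteq> ideal_prod D (zd_mult D \<alpha> ` I) J"
proof (rule image_subsetI)
  fix z assume "z \<in> ideal_prod D I J"
  then show "zd_mult D \<alpha> z \<in> ideal_prod D (zd_mult D \<alpha> ` I) J"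
  proof induct
    case (mult x y)
    then show ?case
      using ideal_prod.mult[of "zd_mult D \<alpha> x" "zd_mult D \<alpha> ` I" y J D] by (simp add: zd_mult_assoc)
  next
    case (add z w)
    then show ?case
      using ideal_prod.add[OF add(2,4)] by (simp add: zd_mult_def algebra_simps)
  next
    case (uminus z)
    then show ?case
      using ideal_prod.uminus[OF uminus(2)] by (simp add: zd_mult_def algebra_simps)
  qed (simp add: zd_mult_def ideal_prod.zero)
qed

lemma ideal_prod_image_zd_mult_subset:
  "ideal_prod D (zd_mult D \<alpha> ` I) J \<subseteq> zd_mult D \<alpha> ` ideal_prod D I J"
proof
  fix z assume "z \<in> ideal_prod D (zd_mult D \<alpha> ` I) J"
  then show "z \<in> zd_mult D \<alpha> ` ideal_prod D I J"
  proof induct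
    case (mult x y)
    then obtain x' where "x' \<in> I" "x = zd_mult D \<alpha> x'" by blast
    then show ?case
      using ideal_prod.mult[OF \<open>x' \<in> I\<close> mult(2)] by (auto simp: zd_mult_assoc)
  next
    case zero
    show ?case
      using ideal_prod.zero by (force simp: zd_mult_def)
  next
    case (add z w)
    then obtain z' w' where z': "z' \<in> ideal_prod D I J" "z = zd_mult D \<alpha> z'"
      and w': "w' \<in> ideal_prod D I J" "w = zd_mult D \<alpha> w'" by blast
    have "(fst z + fst w, snd z + snd w) = zd_mult D \<alpha> (fst z' + fst w', snd z' + snd w')"
      using z'(2) w'(2) by (simp add: zd_mult_def algebra_simps)
    then show ?case
      using ideal_prod.add[OF z'(1) w'(1)] by (rule rev_image_eqI[rotated])
  next
    case (uminus z)
    then obtain z' where z': "z' \<in> ideal_prod D I J" "z = zd_mult D \<alpha> z'" by blast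
    have "(- fst z, - snd z) = zd_mult D \<alpha> (- fst z', - snd z')"
      using z'(2) by (simp add: zd_mult_def algebra_simps)
    then show ?case
      using ideal_prod.uminus[OF z'(1)] by (rule rev_image_eqI[rotated])
  qed
qed

lemma image_zd_mult_ideal_prod:
  "zd_mult D \<alpha> ` ideal_prod D I J = ideal_prod D (zd_mult D \<alpha> ` I) J"
  using image_zd_mult_ideal_prod_subset ideal_prod_image_zd_mult_subset by (rule subset_antisym)

lemma ideal_prod_image_zd_mult:
  "ideal_prod D (zd_mult D \<alpha> ` I) (zd_mult D \<beta> ` J) = zd_mult D (zd_mult D \<alpha> \<beta>) ` ideal_prod D I J"
proof -
  have "ideal_prod D I (zd_mult D \<beta> ` J) = zd_mult D \<beta> ` ideal_prod D I J"
    by (simp add: ideal_prod_commute[of D I] image_zd_mult_ideal_prod)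
  then show ?thesis
    by (simp add: image_zd_mult_ideal_prod[symmetric] image_zd_mult_image)
qed

lemma ideal_equiv_ideal_prod:
  assumes "D > 0" "ideal_equiv D I I'" "ideal_equiv D J J'"
  shows "ideal_equiv D (ideal_prod D I J) (ideal_prod D I' J')"
proof -
  obtain \<alpha> \<beta> where \<alpha>\<beta>: "\<alpha> \<noteq> (0,0)" "\<beta> \<noteq> (0,0)" "zd_mult D \<alpha> ` I = zd_mult D \<beta> ` I'"
    using assms(2) ideal_equiv_def by metis
  obtain \<gamma> \<delta> where \<gamma>\<delta>: "\<gamma> \<noteq> (0,0)" "\<delta> \<noteq> (0,0)" "zd_mult D \<gamma> ` J = zd_mult D \<delta> ` J'"
    using assms(3) ideal_equiv_def by metis
  have "zd_mult D (zd_mult D \<alpha> \<gamma>) ` ideal_prod D I J = zd_mult D (zd_mult D \<beta> \<delta>) ` ideal_prod D I' J'"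
    by (metis \<alpha>\<beta>(3) \<gamma>\<delta>(3) ideal_prod_image_zd_mult)
  then show ?thesis
    unfolding ideal_equiv_def using assms(1) \<alpha>\<beta> \<gamma>\<delta> zd_mult_eq_0_iff by metis
qed

section \<open>Forms and their ideals\<close>

definition zspan :: "int \<times> int \<Rightarrow> int \<times> int \<Rightarrow> (int \<times> int) set" where
  "zspan e1 e2 = {(m * fst e1 + n * fst e2, m * snd e1 + n * snd e2) | m n. True}"

\<comment> \<open>The ideal (a, t - \<surd>-D), when a divides t^2 + D.\<close>
definition root_ideal :: "int \<Rightarrow> int \<Rightarrow> (int \<times> int) set" where
  "root_ideal a t = {z. a dvd fst z + t * snd z}"

definition form_ideal :: "qform \<Rightarrow> (int \<times> int) set" where
  "form_ideal f = root_ideal (fst f) (fst (snd f) div 2)"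

lemma zspan_memI:
  "z = (m * fst e1 + n * fst e2, m * snd e1 + n * snd e2) \<Longrightarrow> z \<in> zspan e1 e2"
  unfolding zspan_def by blast

lemma zspan_subset:
  assumes "e1 \<in> zspan f1 f2" "e2 \<in> zspan f1 f2"
  shows "zspan e1 e2 \<subseteq> zspan f1 f2"
proof
  fix z assume "z \<in> zspan e1 e2"
  then obtain m n where z: "z = (m * fst e1 + n * fst e2, m * snd e1 + n * snd e2)"
    unfolding zspan_def by blast
  obtain m1 n1 where e1: "e1 = (m1 * fst f1 + n1 * fst f2, m1 * snd f1 + n1 * snd f2)"
    using assms(1) unfolding zspan_def by blast
  obtain m2 n2 where e2: "e2 = (m2 * fst f1 + n2 * fst f2, m2 * snd f1 + n2 * snd f2)"
    using assms(2) unfolding zspan_def by blast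
  show "z \<in> zspan f1 f2"
    by (rule zspan_memI[where m = "m*m1 + n*m2" and n = "m*n1 + n*n2"])
      (simp add: z e1 e2 algebra_simps)
qed

lemma root_ideal_eq_zspan: "root_ideal a t = zspan (a,0) (-t,1)"
proof
  show "root_ideal a t \<subseteq> zspan (a,0) (-t,1)"
  proof
    fix z assume "z \<in> root_ideal a t"
    then obtain k where "fst z + t * snd z = a * k"
      by (auto simp: root_ideal_def)
    then show "z \<in> zspan (a,0) (-t,1)"
      by (intro zspan_memI[where m = k and n = "snd z"]) (cases z, simp add: algebra_simps)
  qed
qed (auto simp: root_ideal_def zspan_def algebra_simps)

lemma root_ideal_cong:
  assumes "a dvd t - t'"
  shows "root_ideal a t = root_ideal a t'"
proof -
  have "a dvd u + t * v \<longleftrightarrow> a dvd u + t' * v" for u v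
  proof -
    have "a dvd (t - t') * v"
      using assms by simp
    then have "a dvd (t - t') * v + (u + t' * v) \<longleftrightarrow> a dvd u + t' * v"
      by (rule dvd_add_right_iff)
    moreover have "(t - t') * v + (u + t' * v) = u + t * v"
      by (simp add: algebra_simps)
    ultimately show ?thesis
      by simp
  qed
  then show ?thesis
    unfolding root_ideal_def by simp
qed

lemma image_zd_mult_zspan:
  "zd_mult D \<alpha> ` zspan e1 e2 = zspan (zd_mult D \<alpha> e1) (zd_mult D \<alpha> e2)"
proof -
  have comb: "zd_mult D \<alpha> (m * fst e1 + n * fst e2, m * snd e1 + n * snd e2) =
    (m * fst (zd_mult D \<alpha> e1) + n * fst (zd_mult D \<alpha> e2),
     m * snd (zd_mult D \<alpha> e1) + n * snd (zd_mult D \<alpha> e2))" for m n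
    by (simp add: zd_mult_def algebra_simps)
  show ?thesis
  proof
    show "zd_mult D \<alpha> ` zspan e1 e2 \<subseteq> zspan (zd_mult D \<alpha> e1) (zd_mult D \<alpha> e2)"
    proof (rule image_subsetI)
      fix z assume "z \<in> zspan e1 e2"
      then obtain m n where "z = (m * fst e1 + n * fst e2, m * snd e1 + n * snd e2)"
        unfolding zspan_def by blast
      then show "zd_mult D \<alpha> z \<in> zspan (zd_mult D \<alpha> e1) (zd_mult D \<alpha> e2)"
        by (intro zspan_memI[where m = m and n = n]) (simp add: comb)
    qed
  next
    show "zspan (zd_mult D \<alpha> e1) (zd_mult D \<alpha> e2) \<subseteq> zd_mult D \<alpha> ` zspan e1 e2"
    proof
      fix z assume "z \<in> zspan (zd_mult D \<alpha> e1) (zd_mult D \<alpha> e2)"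
      then obtain m n where "z = zd_mult D \<alpha> (m * fst e1 + n * fst e2, m * snd e1 + n * snd e2)"
        unfolding zspan_def comb by blast
      then show "z \<in> zd_mult D \<alpha> ` zspan e1 e2"
        unfolding zspan_def by blast
    qed
  qed
qed

lemma zspan_unimodular:
  assumes "p * s - q * r = (1::int)"
  shows "zspan (s*x1 + r*x2, s*y1 + r*y2) (q*x1 + p*x2, q*y1 + p*y2) = zspan (x1,y1) (x2,y2)"
    (is "zspan ?e1 ?e2 = zspan ?v1 ?v2")
proof
  show "zspan ?e1 ?e2 \<subseteq> zspan ?v1 ?v2"
    by (intro zspan_subset zspan_memI) simp_all
next
  have inv1: "p * (s*u + r*v) - r * (q*u + p*v) = u" for u v
  proof -
    have "p * (s*u + r*v) - r * (q*u + p*v) = (p * s - q * r) * u"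
      by (simp add: algebra_simps)
    then show ?thesis using assms by simp
  qed
  have inv2: "s * (q*u + p*v) - q * (s*u + r*v) = v" for u v
  proof -
    have "s * (q*u + p*v) - q * (s*u + r*v) = (p * s - q * r) * v"
      by (simp add: algebra_simps)
    then show ?thesis using assms by simp
  qed
  have "?v1 \<in> zspan ?e1 ?e2"
    by (rule zspan_memI[where m = p and n = "-r"]) (simp add: inv1)
  moreover have "?v2 \<in> zspan ?e1 ?e2"
    by (rule zspan_memI[where m = "-q" and n = s]) (simp add: inv2)
  ultimately show "zspan ?v1 ?v2 \<subseteq> zspan ?e1 ?e2"
    by (rule zspan_subset)
qed

lemma ppd_forms_even:
  assumes "f \<in> ppd_forms (-4*D)"
  obtains a b c where "f = (a, 2*b, c)" "a > 0" "a * c = b^2 + D"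
proof -
  obtain a B c where f: "f = (a, B, c)"
    by (cases f)
  have disc: "B^2 - 4*a*c = -4*D" and "a > 0"
    using assms f by (auto simp: ppd_forms_def qf_disc_def)
  then have "B^2 = 2 * (2 * (a*c - D))"
    by (simp add: algebra_simps)
  then have "even B"
    by (metis dvd_triv_left even_power pos2)
  then obtain b where "B = 2*b"
    by blast
  moreover have "a * c = b^2 + D"
    using disc \<open>B = 2*b\<close> by (simp add: power2_eq_square algebra_simps)
  ultimately show ?thesis
    using that f \<open>a > 0\<close> by blast
qed

lemma sl2_equiv_coeffs:
  assumes "sl2_equiv (a, 2*b, c) (a', 2*b', c')"
  obtains p q r s where "p * s - q * r = 1"
    "a' = a*p^2 + 2*b*p*r + c*r^2" "b' = a*p*q + b*(p*s + q*r) + c*r*s"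
proof -
  obtain p q r s where det: "p * s - q * r = 1"
    and subst: "\<And>x y. qf_eval (a', 2*b', c') x y = qf_eval (a, 2*b, c) (p * x + q * y) (r * x + s * y)"
    using assms unfolding sl2_equiv_def by blast
  have a': "a' = a*p^2 + 2*b*p*r + c*r^2"
    using subst[of 1 0] by (simp add: qf_eval_def)
  have c': "c' = a*q^2 + 2*b*q*s + c*s^2"
    using subst[of 0 1] by (simp add: qf_eval_def)
  have "a' + 2*b' + c' = a*(p+q)^2 + 2*b*(p+q)*(r+s) + c*(r+s)^2"
    using subst[of 1 1] by (simp add: qf_eval_def)
  then have "b' = a*p*q + b*(p*s + q*r) + c*r*s"
    using a' c' by (simp add: power2_eq_square algebra_simps)
  then show ?thesis
    by (rule that[OF det a'])
qed

lemma sl2_equiv_ideal_equiv: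
  assumes "f \<in> ppd_forms (-4*D)" "g \<in> ppd_forms (-4*D)" "sl2_equiv f g"
  shows "ideal_equiv D (form_ideal f) (form_ideal g)"
proof -
  obtain a b c where f: "f = (a, 2*b, c)" "a > 0" "a * c = b^2 + D"
    using ppd_forms_even[OF assms(1)] by blast
  obtain a' b' c' where g: "g = (a', 2*b', c')" "a' > 0"
    using ppd_forms_even[OF assms(2)] by blast
  obtain p q r s where det: "p * s - q * r = 1"
    and a': "a' = a*p^2 + 2*b*p*r + c*r^2" and b': "b' = a*p*q + b*(p*s + q*r) + c*r*s"
    using assms(3) unfolding f(1) g(1) by (rule sl2_equiv_coeffs)
  \<comment> \<open>Multiplying the ideal of f by \<alpha> and that of g by a, the bases (a, -b + \<surd>-D) and
    (a', -b' + \<surd>-D) become related by the substitution matrix.\<close>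
  define \<alpha> where "\<alpha> = (a*p + b*r, r)"
  \<comment> \<open>Qualified, since HOL-Algebra reuses the method name algebra.\<close>
  have "s*(a*a') + r*(-(a*b')) = a*(a*p + b*r)"
    using det unfolding a' b' by (Groebner_Basis.algebra)
  then have e1: "zd_mult D \<alpha> (a,0) = (s*(a*a') + r*(-(a*b')), s*0 + r*a)"
    by (simp add: \<alpha>_def zd_mult_def algebra_simps)
  have "q*(a*a') + p*(-(a*b')) = - b*(a*p + b*r) - D*r"
    using det f(3) unfolding a' b' by (Groebner_Basis.algebra)
  then have e2: "zd_mult D \<alpha> (-b,1) = (q*(a*a') + p*(-(a*b')), q*0 + p*a)"
    by (simp add: \<alpha>_def zd_mult_def algebra_simps)
  have fI: "form_ideal f = root_ideal a b" and gI: "form_ideal g = root_ideal a' b'"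
    by (simp_all add: f(1) g(1) form_ideal_def)
  have "zd_mult D \<alpha> ` form_ideal f = zspan (a*a', 0) (-(a*b'), a)"
    unfolding fI root_ideal_eq_zspan image_zd_mult_zspan e1 e2 by (rule zspan_unimodular[OF det])
  also have "\<dots> = zd_mult D (a,0) ` form_ideal g"
    unfolding gI root_ideal_eq_zspan image_zd_mult_zspan by (simp add: zd_mult_def)
  finally have "zd_mult D \<alpha> ` form_ideal f = zd_mult D (a,0) ` form_ideal g" .
  moreover have "\<alpha> \<noteq> (0,0)"
  proof
    assume "\<alpha> = (0,0)"
    then have "r = 0" "a * p = 0"
      unfolding \<alpha>_def by auto
    then show False
      using det f(2) by simp
  qed
  moreover have "(a, 0) \<noteq> ((0,0) :: int \<times> int)"
    using f(2) by simp
  ultimately show ?thesis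
    unfolding ideal_equiv_def by metis
qed

lemma zspan_subset_ideal_prod:
  "e1 \<in> ideal_prod D I J \<Longrightarrow> e2 \<in> ideal_prod D I J \<Longrightarrow> zspan e1 e2 \<subseteq> ideal_prod D I J"
  unfolding zspan_def using ideal_prod_lin_comb[of "fst e1" "snd e1" D I J "fst e2" "snd e2"] by force

lemma ideal_prod_root_ideal_subset:
  assumes "a1 * a2 dvd t^2 + D"
  shows "ideal_prod D (root_ideal a1 t) (root_ideal a2 t) \<subseteq> root_ideal (a1 * a2) t"
proof -
  obtain c where c: "t^2 + D = a1 * a2 * c"
    using assms by blast
  show ?thesis
  proof
    fix z assume "z \<in> ideal_prod D (root_ideal a1 t) (root_ideal a2 t)"
    then show "z \<in> root_ideal (a1 * a2) t"
    proof induct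
      case (mult x y)
      obtain k1 where k1: "fst x + t * snd x = a1 * k1"
        using mult(1) by (auto simp: root_ideal_def)
      obtain k2 where k2: "fst y + t * snd y = a2 * k2"
        using mult(2) by (auto simp: root_ideal_def)
      have "fst (zd_mult D x y) + t * snd (zd_mult D x y) = a1 * a2 * (k1*k2 - c * snd x * snd y)"
        using c k1 k2 unfolding zd_mult_def fst_conv snd_conv by (Groebner_Basis.algebra)
      then show ?case
        by (simp add: root_ideal_def)
    next
      case (add z w)
      have "fst z + fst w + t * (snd z + snd w) = (fst z + t * snd z) + (fst w + t * snd w)"
        by (simp add: algebra_simps)
      then show ?case
        using add(2,4) unfolding root_ideal_def mem_Collect_eq fst_conv snd_conv
        by (simp only: dvd_add)
    next
      case (uminus z)
      have "- fst z + t * - snd z = - (fst z + t * snd z)"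
        by (simp add: algebra_simps)
      then show ?case
        using uminus(2) unfolding root_ideal_def mem_Collect_eq fst_conv snd_conv
        by (simp only: dvd_minus_iff)
    qed (simp add: root_ideal_def)
  qed
qed

\<comment> \<open>-t + \<surd>-D is an integer combination of the four products of the generators a1, a2 and
  -t + \<surd>-D, with coefficients from a Bezout relation between a1, a2 and 2t.\<close>
lemma root_generator_mem_ideal_prod:
  assumes "a1 * a2 dvd t^2 + D" "gcd a1 (gcd a2 (2*t)) = 1"
  shows "(-t, 1) \<in> ideal_prod D (root_ideal a1 t) (root_ideal a2 t)"
proof -
  obtain c where c: "t^2 + D = a1 * a2 * c"
    using assms(1) by blast
  let ?P = "ideal_prod D (root_ideal a1 t) (root_ideal a2 t)"
  have A1: "(a1, 0) \<in> root_ideal a1 t" and A2: "(a2, 0) \<in> root_ideal a2 t"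
    and T1: "(-t, 1) \<in> root_ideal a1 t" and T2: "(-t, 1) \<in> root_ideal a2 t"
    by (simp_all add: root_ideal_def)
  have P0: "(a1*a2, 0) \<in> ?P"
    using ideal_prod.mult[OF A1 A2] by (simp add: zd_mult_def)
  obtain u v where uv: "u * a1 + v * gcd a2 (2*t) = 1"
    using bezout_int[of a1 "gcd a2 (2*t)"] assms(2) by auto
  obtain u' v' where uv': "u' * a2 + v' * (2*t) = gcd a2 (2*t)"
    using bezout_int by blast
  have bezout: "u * a1 + (v*u') * a2 + (v*v') * (2*t) = 1"
    using uv uv' by (Groebner_Basis.algebra)
  have Q1: "(-a1*t, a1) \<in> ?P"
    using ideal_prod.mult[OF A1 T2] by (simp add: zd_mult_def)
  have Q2: "(-a2*t, a2) \<in> ?P"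
    using ideal_prod.mult[OF T1 A2] by (simp add: zd_mult_def ac_simps)
  have "(t^2 - D, -2*t) \<in> ?P"
    using ideal_prod.mult[OF T1 T2] by (simp add: zd_mult_def power2_eq_square)
  have "-2*t*t = -1 * (t^2 - D) + -c * (a1*a2)"
    using c by (Groebner_Basis.algebra)
  moreover have "2*t = -1 * (-2*t) + -c * 0"
    by simp
  ultimately have "(-2*t*t, 2*t) = (-1 * (t^2 - D) + -c * (a1*a2), -1 * (-2*t) + -c * 0)"
    by (rule arg_cong2[where f = Pair])
  then have Q3: "(-2*t*t, 2*t) \<in> ?P"
    by (rule ideal_prod_lin_comb[OF \<open>(t^2 - D, -2*t) \<in> ?P\<close> P0])
  have V: "(u * (-a1*t) + (v*u') * (-a2*t), u * a1 + (v*u') * a2) \<in> ?P"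
    by (rule ideal_prod_lin_comb[OF Q1 Q2 refl])
  have "-t = 1 * (u * (-a1*t) + (v*u') * (-a2*t)) + (v*v') * (-2*t*t)"
    using bezout by (Groebner_Basis.algebra)
  moreover have "1 = 1 * (u * a1 + (v*u') * a2) + (v*v') * (2*t)"
    using bezout by simp
  ultimately have "(-t, 1) = (1 * (u * (-a1*t) + (v*u') * (-a2*t)) + (v*v') * (-2*t*t),
      1 * (u * a1 + (v*u') * a2) + (v*v') * (2*t))"
    by (rule arg_cong2[where f = Pair])
  then show ?thesis
    by (rule ideal_prod_lin_comb[OF V Q3])
qed

lemma root_ideal_subset_ideal_prod:
  assumes "a1 * a2 dvd t^2 + D" "gcd a1 (gcd a2 (2*t)) = 1"
  shows "root_ideal (a1 * a2) t \<subseteq> ideal_prod D (root_ideal a1 t) (root_ideal a2 t)"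
proof -
  have "zd_mult D (a1, 0) (a2, 0) \<in> ideal_prod D (root_ideal a1 t) (root_ideal a2 t)"
    by (rule ideal_prod.mult) (simp_all add: root_ideal_def)
  then have "(a1*a2, 0) \<in> ideal_prod D (root_ideal a1 t) (root_ideal a2 t)"
    by (simp add: zd_mult_def)
  then show ?thesis
    unfolding root_ideal_eq_zspan[of "a1 * a2"]
    using root_generator_mem_ideal_prod[OF assms] by (rule zspan_subset_ideal_prod)
qed

lemma ideal_prod_root_ideal:
  assumes "a1 * a2 dvd t^2 + D" "gcd a1 (gcd a2 (2*t)) = 1"
  shows "ideal_prod D (root_ideal a1 t) (root_ideal a2 t) = root_ideal (a1 * a2) t"
  using ideal_prod_root_ideal_subset[OF assms(1)] root_ideal_subset_ideal_prod[OF assms]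
  by (rule subset_antisym)

section \<open>The class group hypothesis\<close>

lemma dirichlet_ok_even:
  assumes "dirichlet_ok (-4*D) (a1, 2*b1, c1) (a2, 2*b2, c2) B"
  obtains t where "B = 2*t" "a1 dvd t - b1" "a2 dvd t - b2" "a1 * a2 dvd t^2 + D"
    "gcd a1 (gcd a2 (2*t)) = 1"
proof -
  have ok: "gcd a1 (gcd a2 (b1 + b2)) = 1" "2*a1 dvd B - 2*b1" "2*a2 dvd B - 2*b2"
    "4*a1*a2 dvd B^2 + 4*D"
    using assms by (simp_all add: dirichlet_ok_def cong_iff_dvd_diff add.commute)
  obtain k where "B - 2*b1 = 2 * a1 * k"
    using ok(2) by blast
  then have "B = 2 * (b1 + a1 * k)"
    by (simp add: algebra_simps)
  then obtain t where t: "B = 2*t"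
    by blast
  have "2 * a1 dvd 2 * (t - b1)" "2 * a2 dvd 2 * (t - b2)"
    using ok(2,3) t by (simp_all add: right_diff_distrib)
  then have dvd1: "a1 dvd t - b1" and dvd2: "a2 dvd t - b2"
    by (simp_all only: dvd_mult_cancel_left) simp_all
  have "4 * (a1*a2) dvd 4 * (t^2 + D)"
    using ok(4) by (simp add: t power2_eq_square algebra_simps)
  then have dvd3: "a1 * a2 dvd t^2 + D"
    by (simp only: dvd_mult_cancel_left) simp
  have "gcd a1 (gcd a2 (2*t)) dvd gcd a1 (gcd a2 (b1 + b2))"
  proof -
    let ?g = "gcd a1 (gcd a2 (2*t))"
    have g: "?g dvd a1" "?g dvd a2" "?g dvd 2*t"
      by (meson gcd_dvd1 gcd_dvd2 dvd_trans)+
    have "b1 + b2 = 2*t - (t - b1) - (t - b2)"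
      by simp
    moreover have "?g dvd t - b1" "?g dvd t - b2"
      using g dvd1 dvd2 by (meson dvd_trans)+
    ultimately have "?g dvd b1 + b2"
      using g(3) by (metis dvd_diff)
    then show ?thesis
      using g by simp
  qed
  then have "gcd a1 (gcd a2 (2*t)) = 1"
    using ok(1) by simp
  then show ?thesis
    by (rule that[OF t dvd1 dvd2 dvd3])
qed

lemma dirichlet_comp_form_ideal:
  assumes "f1 \<in> ppd_forms (-4*D)" "f2 \<in> ppd_forms (-4*D)" "dirichlet_ok (-4*D) f1 f2 B"
  shows "form_ideal (dirichlet_comp (-4*D) f1 f2 B) = ideal_prod D (form_ideal f1) (form_ideal f2)"
proof -
  obtain a1 b1 c1 where f1: "f1 = (a1, 2*b1, c1)"
    using ppd_forms_even[OF assms(1)] by blast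
  obtain a2 b2 c2 where f2: "f2 = (a2, 2*b2, c2)"
    using ppd_forms_even[OF assms(2)] by blast
  obtain t where t: "B = 2*t" and dvd1: "a1 dvd t - b1" and dvd2: "a2 dvd t - b2"
    and dvd3: "a1 * a2 dvd t^2 + D" and gcd: "gcd a1 (gcd a2 (2*t)) = 1"
    using assms(3) unfolding f1 f2 by (rule dirichlet_ok_even)
  have "form_ideal (dirichlet_comp (-4*D) f1 f2 B) = root_ideal (a1 * a2) t"
    by (simp add: dirichlet_comp_def form_ideal_def f1 f2 t)
  also have "\<dots> = ideal_prod D (root_ideal a1 t) (root_ideal a2 t)"
    by (rule ideal_prod_root_ideal[OF dvd3 gcd, symmetric])
  also have "\<dots> = ideal_prod D (form_ideal f1) (form_ideal f2)"
    using root_ideal_cong[OF dvd1] root_ideal_cong[OF dvd2] by (simp add: form_ideal_def f1 f2)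
  finally show ?thesis .
qed

lemma ideal_equiv_dirichlet_comp:
  assumes "D > 0"
    and "f \<in> ppd_forms (-4*D)" "f' \<in> ppd_forms (-4*D)" "sl2_equiv f f'"
    and "g \<in> ppd_forms (-4*D)" "g' \<in> ppd_forms (-4*D)" "sl2_equiv g g'"
    and "dirichlet_ok (-4*D) f g B" "dirichlet_ok (-4*D) f' g' B'"
  shows "ideal_equiv D (form_ideal (dirichlet_comp (-4*D) f g B))
                       (form_ideal (dirichlet_comp (-4*D) f' g' B'))"
  using ideal_equiv_ideal_prod[OF assms(1) sl2_equiv_ideal_equiv[OF assms(2-4)]
      sl2_equiv_ideal_equiv[OF assms(5-7)]]
  unfolding dirichlet_comp_form_ideal[OF assms(2,5,8)] dirichlet_comp_form_ideal[OF assms(3,6,9)] .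

\<comment> \<open>form_class_group is not known to be a group, so a square is compared with another
  square rather than with the unit.\<close>
lemma iso_Z2_power_squares_eq:
  assumes "h \<in> iso G (Z2_power n)"
    and "U \<in> carrier G" "U \<otimes>\<^bsub>G\<^esub> U \<in> carrier G" "V \<in> carrier G" "V \<otimes>\<^bsub>G\<^esub> V \<in> carrier G"
  shows "U \<otimes>\<^bsub>G\<^esub> U = V \<otimes>\<^bsub>G\<^esub> V"
proof -
  have hom: "h \<in> hom G (Z2_power n)" and inj: "inj_on h (carrier G)"
    using assms(1) unfolding iso_def bij_betw_def by auto
  have square: "x \<otimes>\<^bsub>Z2_power n\<^esub> x = (\<lambda>i\<in>{..<n}. 0)" for x
  proof -
    have "(x i + x i) mod 2 = 0" for i
      by presburger
    then show ?thesis
      unfolding Z2_power_def by (simp add: integer_mod_group_def)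
  qed
  have "h (U \<otimes>\<^bsub>G\<^esub> U) = h (V \<otimes>\<^bsub>G\<^esub> V)"
    using hom assms(2,4) unfolding hom_def by (simp add: square)
  then show ?thesis
    using inj assms(3,5) by (meson inj_on_def)
qed

lemma carrier_form_class_group: "carrier (form_class_group dd) = ppd_forms dd // sl2_rel dd"
  by (simp add: form_class_group_def)

lemma form_class_group_mult_composite:
  assumes "W \<in> ppd_forms dd // sl2_rel dd" "f \<in> U" "g \<in> V"
    and "dirichlet_ok dd f g B" "dirichlet_comp dd f g B \<in> W"
  obtains f' g' B' where "U \<otimes>\<^bsub>form_class_group dd\<^esub> V \<in> ppd_forms dd // sl2_rel dd"
    "f' \<in> U" "g' \<in> V" "dirichlet_ok dd f' g' B'"
    "dirichlet_comp dd f' g' B' \<in> U \<otimes>\<^bsub>form_class_group dd\<^esub> V"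
proof -
  define Q where "Q W \<longleftrightarrow> W \<in> ppd_forms dd // sl2_rel dd \<and>
    (\<exists>f\<in>U. \<exists>g\<in>V. \<exists>B. dirichlet_ok dd f g B \<and> dirichlet_comp dd f g B \<in> W)" for W
  have "U \<otimes>\<^bsub>form_class_group dd\<^esub> V = (SOME W. Q W)"
    by (simp add: form_class_group_def Q_def)
  moreover have "Q W"
    unfolding Q_def using assms by blast
  ultimately have "Q (U \<otimes>\<^bsub>form_class_group dd\<^esub> V)"
    by (simp add: someI)
  then show ?thesis
    unfolding Q_def using that by blast
qed

lemma mem_sl2_class_iff:
  "g \<in> sl2_rel dd `` {f} \<longleftrightarrow> f \<in> ppd_forms dd \<and> g \<in> ppd_forms dd \<and> sl2_equiv f g"
  unfolding sl2_rel_def by simp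

lemma sl2_equiv_refl: "sl2_equiv f f"
  unfolding sl2_equiv_def by (rule exI[of _ 1], rule exI[of _ 0], rule exI[of _ 0], rule exI[of _ 1]) simp

lemma mem_own_sl2_class: "f \<in> ppd_forms dd \<Longrightarrow> f \<in> sl2_rel dd `` {f}"
  unfolding mem_sl2_class_iff using sl2_equiv_refl by blast

lemma principal_form:
  assumes "D > 0"
  shows "(1, 0, D) \<in> ppd_forms (-4*D)" "dirichlet_ok (-4*D) (1, 0, D) (1, 0, D) 0"
    and "dirichlet_comp (-4*D) (1, 0, D) (1, 0, D) 0 = (1, 0, D)" "form_ideal (1, 0, D) = UNIV"
  using assms by (simp_all add: ppd_forms_def qf_disc_def dirichlet_ok_def dirichlet_comp_def
      cong_iff_dvd_diff form_ideal_def root_ideal_def)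

lemma sl2_class_square_composite:
  assumes "g \<in> ppd_forms dd" "dirichlet_ok dd g g B" "dirichlet_comp dd g g B \<in> ppd_forms dd"
  defines "X \<equiv> sl2_rel dd `` {g}"
  obtains f1 g1 B1 where "X \<otimes>\<^bsub>form_class_group dd\<^esub> X \<in> ppd_forms dd // sl2_rel dd"
    "f1 \<in> ppd_forms dd" "sl2_equiv g f1" "g1 \<in> ppd_forms dd" "sl2_equiv g g1"
    "dirichlet_ok dd f1 g1 B1" "dirichlet_comp dd f1 g1 B1 \<in> X \<otimes>\<^bsub>form_class_group dd\<^esub> X"
proof -
  obtain f1 g1 B1 where XX: "X \<otimes>\<^bsub>form_class_group dd\<^esub> X \<in> ppd_forms dd // sl2_rel dd"
    and fg1: "f1 \<in> X" "g1 \<in> X" and ok: "dirichlet_ok dd f1 g1 B1"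
    and comp: "dirichlet_comp dd f1 g1 B1 \<in> X \<otimes>\<^bsub>form_class_group dd\<^esub> X"
    unfolding X_def
    by (rule form_class_group_mult_composite[OF quotientI[OF assms(3)]
        mem_own_sl2_class[OF assms(1)] mem_own_sl2_class[OF assms(1)] assms(2)
        mem_own_sl2_class[OF assms(3)]])
  have "f1 \<in> ppd_forms dd" "sl2_equiv g f1" "g1 \<in> ppd_forms dd" "sl2_equiv g g1"
    using fg1 unfolding X_def mem_sl2_class_iff by blast+
  then show ?thesis
    by (rule that[OF XX _ _ _ _ ok comp])
qed

lemma ideal_equiv_same_class:
  assumes "D > 0" "C \<in> ppd_forms (-4*D) // sl2_rel (-4*D)" "f \<in> C" "g \<in> C"
  shows "ideal_equiv D (form_ideal f) (form_ideal g)"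
proof -
  obtain w where cls: "C = sl2_rel (-4*D) `` {w}" and w: "w \<in> ppd_forms (-4*D)"
    by (rule quotientE[OF assms(2)])
  have "f \<in> ppd_forms (-4*D)" "sl2_equiv w f" "g \<in> ppd_forms (-4*D)" "sl2_equiv w g"
    using assms(3,4) unfolding cls mem_sl2_class_iff by blast+
  then have "ideal_equiv D (form_ideal w) (form_ideal f)" "ideal_equiv D (form_ideal w) (form_ideal g)"
    by (simp_all add: sl2_equiv_ideal_equiv[OF w])
  then show ?thesis
    using ideal_equiv_trans[OF assms(1) ideal_equiv_sym] by blast
qed

\<comment> \<open>The class of the composite of g with itself is a square, hence equal to the square of the
  principal class, whose ideals are principal.\<close>
lemma dirichlet_square_ideal_principal:
  assumes "D > 0" and "\<exists>n. form_class_group (-4*D) \<cong> Z2_power n"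
    and g: "g \<in> ppd_forms (-4*D)" and ok: "dirichlet_ok (-4*D) g g B"
    and F: "dirichlet_comp (-4*D) g g B \<in> ppd_forms (-4*D)"
  shows "ideal_equiv D (form_ideal (dirichlet_comp (-4*D) g g B)) UNIV"
proof -
  let ?dd = "-4*D" and ?G = "form_class_group (-4*D)"
  let ?P = "sl2_rel ?dd `` {(1, 0, D)}" and ?X = "sl2_rel ?dd `` {g}"
  obtain n h where h: "h \<in> iso ?G (Z2_power n)"
    using assms(2) unfolding is_iso_def by blast
  note e = principal_form[OF assms(1)]
  obtain e1 e2 B0 where PP: "?P \<otimes>\<^bsub>?G\<^esub> ?P \<in> ppd_forms ?dd // sl2_rel ?dd"
    and e12: "e1 \<in> ppd_forms ?dd" "sl2_equiv (1, 0, D) e1" "e2 \<in> ppd_forms ?dd"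
      "sl2_equiv (1, 0, D) e2" "dirichlet_ok ?dd e1 e2 B0"
    and h0: "dirichlet_comp ?dd e1 e2 B0 \<in> ?P \<otimes>\<^bsub>?G\<^esub> ?P"
    by (rule sl2_class_square_composite[OF e(1,2)]) (use e(1,3) in simp_all)
  obtain f1 g1 B1 where XX: "?X \<otimes>\<^bsub>?G\<^esub> ?X \<in> ppd_forms ?dd // sl2_rel ?dd"
    and fg1: "f1 \<in> ppd_forms ?dd" "sl2_equiv g f1" "g1 \<in> ppd_forms ?dd" "sl2_equiv g g1"
      "dirichlet_ok ?dd f1 g1 B1"
    and h1: "dirichlet_comp ?dd f1 g1 B1 \<in> ?X \<otimes>\<^bsub>?G\<^esub> ?X"
    by (rule sl2_class_square_composite[OF g ok F])
  have "?X \<otimes>\<^bsub>?G\<^esub> ?X = ?P \<otimes>\<^bsub>?G\<^esub> ?P"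
    by (rule iso_Z2_power_squares_eq[OF h])
      (use e(1) g XX PP in \<open>simp_all add: carrier_form_class_group quotientI\<close>)
  with h1 have h1': "dirichlet_comp ?dd f1 g1 B1 \<in> ?P \<otimes>\<^bsub>?G\<^esub> ?P"
    by simp
  note ideal_equiv_trans[OF assms(1), trans]
  have "ideal_equiv D UNIV (form_ideal (dirichlet_comp ?dd e1 e2 B0))"
    using ideal_equiv_dirichlet_comp[OF assms(1) e(1) e12(1,2) e(1) e12(3,4) e(2) e12(5)] e(3,4)
    by simp
  also have "ideal_equiv D (form_ideal (dirichlet_comp ?dd e1 e2 B0))
      (form_ideal (dirichlet_comp ?dd f1 g1 B1))"
    by (rule ideal_equiv_same_class[OF assms(1) PP h0 h1'])
  also have "ideal_equiv D (form_ideal (dirichlet_comp ?dd f1 g1 B1))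
      (form_ideal (dirichlet_comp ?dd g g B))"
    using ideal_equiv_dirichlet_comp[OF assms(1) g fg1(1,2) g fg1(3,4) ok fg1(5)] ideal_equiv_sym
    by blast
  finally show ?thesis
    by (rule ideal_equiv_sym)
qed

section \<open>Principal ideals and representations\<close>

lemma principal_of_ideal_equiv_UNIV:
  assumes "D > 0" "ideal_equiv D I UNIV"
  obtains \<gamma> where "I = range (zd_mult D \<gamma>)"
proof -
  obtain \<alpha> \<beta> where \<alpha>: "\<alpha> \<noteq> (0,0)" and eq: "zd_mult D \<alpha> ` I = range (zd_mult D \<beta>)"
    using assms(2) unfolding ideal_equiv_def by metis
  have inj: "inj (zd_mult D \<alpha>)"
    using zd_mult_left_cancel[OF assms(1) \<alpha>] by (rule injI)
  have "\<beta> \<in> zd_mult D \<alpha> ` I"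
    unfolding eq by (metis rangeI zd_mult_one(2))
  then obtain \<gamma> where "\<beta> = zd_mult D \<alpha> \<gamma>"
    by (rule imageE)
  then have "zd_mult D \<alpha> ` I = zd_mult D \<alpha> ` range (zd_mult D \<gamma>)"
    using eq by (simp only: image_zd_mult_image)
  then have "I = range (zd_mult D \<gamma>)"
    using inj by (simp only: inj_image_eq_iff)
  then show ?thesis
    by (rule that)
qed

lemma root_ideal_dvd_zd_norm:
  assumes "M dvd t^2 + D" "z \<in> root_ideal M t"
  shows "M dvd zd_norm D z"
proof -
  obtain k where "fst z + t * snd z = M * k"
    using assms(2) unfolding root_ideal_def by (blast elim: dvdE)
  then have k: "fst z = M * k - t * snd z"
    by linarith
  obtain l where l: "t^2 + D = M * l"
    using assms(1) by blast
  have "zd_norm D z = M * (M*k*k - 2*k*t*snd z) + (t^2 + D) * (snd z)^2"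
    unfolding zd_norm_def k by (simp add: power2_eq_square algebra_simps)
  also have "\<dots> = M * (M*k*k - 2*k*t*snd z + l * (snd z)^2)"
    unfolding l by (simp add: algebra_simps)
  finally show ?thesis
    by simp
qed

lemma coprime_of_zd_mult_eq:
  assumes "zd_mult D (x, y) w = (u, 1)"
  shows "coprime x y"
proof (rule coprimeI)
  fix d assume "d dvd x" "d dvd y"
  then have "d dvd x * snd w + fst w * y"
    by (simp add: dvd_add dvd_mult dvd_mult2)
  moreover have "x * snd w + fst w * y = 1"
    using assms by (simp add: zd_mult_def)
  ultimately show "is_unit d"
    by simp
qed

\<comment> \<open>The norm of a generator divides the norms M^2, t^2 + D and (M - t)^2 + D of elements of
  the ideal, and it is a multiple of M; coprimality of M and 2t forces it to equal M.\<close>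
lemma zd_norm_generator_root_ideal:
  assumes "D > 0" "M > 0" "M dvd t^2 + D" "coprime M (2*t)"
    and principal: "root_ideal M t = range (zd_mult D \<gamma>)"
  shows "zd_norm D \<gamma> = M"
proof -
  have norm_dvd: "zd_norm D \<gamma> dvd zd_norm D z" if "z \<in> root_ideal M t" for z
    using that unfolding principal by (auto simp: zd_norm_mult)
  have "\<gamma> \<in> root_ideal M t"
    unfolding principal by (metis rangeI zd_mult_one(2))
  then obtain k where k: "zd_norm D \<gamma> = M * k"
    using root_ideal_dvd_zd_norm[OF assms(3)] by blast
  have "M * k dvd M * M"
    using norm_dvd[of "(M, 0)"] k by (simp add: root_ideal_def zd_norm_def power2_eq_square)
  then have "k dvd M"
    using assms(2) by simp
  have "M * k dvd t^2 + D"
    using norm_dvd[of "(-t, 1)"] k by (simp add: root_ideal_def zd_norm_def)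
  moreover have "M * k dvd (t^2 + D) + M * (M - 2*t)"
    using norm_dvd[of "(M - t, 1)"] k
    by (simp add: root_ideal_def zd_norm_def power2_eq_square algebra_simps)
  ultimately have "M * k dvd M * (M - 2*t)"
    by (simp add: dvd_add_right_iff)
  then have "k dvd M - 2*t"
    using assms(2) by simp
  with \<open>k dvd M\<close> have "k dvd M - (M - 2*t)"
    by (rule dvd_diff)
  then have "k dvd 2*t"
    by simp
  then have "is_unit k"
    using \<open>k dvd M\<close> assms(4) coprime_common_divisor by blast
  moreover have "k \<ge> 0"
    using k assms(1,2) zd_norm_nonneg[of D \<gamma>] by (simp add: zero_le_mult_iff)
  ultimately show ?thesis
    using k by simp
qed

lemma primitive_rep_of_principal_root_ideal:
  assumes "D > 0" "M > 0" "M dvd t^2 + D" "coprime M (2*t)"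
    and principal: "root_ideal M t = range (zd_mult D \<gamma>)"
  shows "\<exists>x y. x^2 + D*y^2 = M \<and> coprime x y \<and> M dvd x + t*y"
proof -
  obtain x y where \<gamma>: "\<gamma> = (x, y)"
    by (cases \<gamma>)
  have norm: "x^2 + D*y^2 = M"
    using zd_norm_generator_root_ideal[OF assms] by (simp add: \<gamma> zd_norm_def)
  have "(-t, 1) \<in> range (zd_mult D \<gamma>)"
    unfolding principal[symmetric] by (simp add: root_ideal_def)
  then obtain w where "zd_mult D (x, y) w = (-t, 1)"
    unfolding \<gamma> by auto
  then have cop: "coprime x y"
    by (rule coprime_of_zd_mult_eq)
  have "\<gamma> \<in> root_ideal M t"
    unfolding principal by (metis rangeI zd_mult_one(2))
  then have "M dvd x + t*y"
    by (simp add: \<gamma> root_ideal_def)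
  then show ?thesis
    using norm cop by blast
qed

lemma ppd_form_of_root:
  assumes "D > 0" "a > 0" "a dvd t^2 + D" "coprime a (2*t)"
  shows "(a, 2*t, (t^2 + D) div a) \<in> ppd_forms (-4*D)"
proof -
  obtain l where l: "t^2 + D = a * l"
    using assms(3) by blast
  have "qf_disc (a, 2*t, l) = -4*D"
    using l by (simp add: qf_disc_def power2_eq_square algebra_simps)
  moreover have "gcd a (gcd (2*t) l) = 1"
    using assms(4) by (simp add: gcd.assoc[symmetric])
  ultimately show ?thesis
    using l assms(1,2) by (simp add: ppd_forms_def)
qed

lemma primitive_rep_of_sq_root:
  assumes "D > 0" "\<exists>n. form_class_group (-4*D) \<cong> Z2_power n"
    and "c > 0" "c^2 dvd t^2 + D" "coprime c (2*t)"
  shows "\<exists>x y. x^2 + D*y^2 = c^2 \<and> coprime x y \<and> c^2 dvd x + t*y"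
proof -
  define g where "g = (c, 2*t, (t^2 + D) div c)"
  have "c dvd t^2 + D"
    using assms(4) by (metis dvd_mult_left power2_eq_square)
  have g: "g \<in> ppd_forms (-4*D)"
    unfolding g_def using assms(1,3) \<open>c dvd t^2 + D\<close> assms(5) by (rule ppd_form_of_root)
  have F: "(c^2, 2*t, (t^2 + D) div c^2) \<in> ppd_forms (-4*D)"
    using assms by (intro ppd_form_of_root) simp_all
  have ok: "dirichlet_ok (-4*D) g g (2*t)"
  proof -
    obtain l where "t^2 + D = c^2 * l"
      using assms(4) by blast
    then have "(2*t)^2 - (-4*D) = (4*c*c) * l"
      by (simp add: power2_eq_square algebra_simps)
    then show ?thesis
      using assms(5) by (simp add: g_def dirichlet_ok_def cong_iff_dvd_diff)
  qed
  have "((2*t)^2 - (-4*D)) div (4*c*c) = (4 * (t^2 + D)) div (4 * c^2)"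
    by (simp add: power2_eq_square algebra_simps)
  also have "\<dots> = (t^2 + D) div c^2"
    by (rule div_mult_mult1) simp
  finally have "((2*t)^2 - (-4*D)) div (4*c*c) = (t^2 + D) div c^2" .
  then have comp: "dirichlet_comp (-4*D) g g (2*t) = (c^2, 2*t, (t^2 + D) div c^2)"
    by (simp add: g_def dirichlet_comp_def power2_eq_square)
  have "ideal_equiv D (root_ideal (c^2) t) UNIV"
    using dirichlet_square_ideal_principal[OF assms(1,2) g ok] F
    unfolding comp by (simp add: form_ideal_def)
  then obtain \<gamma> where "root_ideal (c^2) t = range (zd_mult D \<gamma>)"
    using principal_of_ideal_equiv_UNIV[OF assms(1)] by blast
  then show ?thesis
    using primitive_rep_of_principal_root_ideal[OF assms(1) _ assms(4)] assms(3,5) by simp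
qed

section \<open>Square roots of -D modulo c^2\<close>

definition roots_mod :: "int \<Rightarrow> int \<Rightarrow> int set" where
  "roots_mod D m = {t. 0 \<le> t \<and> t < m \<and> m dvd t^2 + D}"

lemma cong_dvd_sq_plus_iff:
  assumes "[r = t] (mod m)"
  shows "m dvd r^2 + D \<longleftrightarrow> m dvd t^2 + D"
proof -
  have "[r^2 + D = t^2 + D] (mod m)"
    using assms by (intro cong_add cong_pow) auto
  then show ?thesis
    by (rule cong_dvd_iff)
qed

lemma mod_mem_roots_mod:
  assumes "m > 0" "m dvd t^2 + D"
  shows "t mod m \<in> roots_mod D m"
  using assms cong_dvd_sq_plus_iff[of "t mod m" t m D] by (simp add: roots_mod_def cong_def)

lemma coprime_odd_prime_double:
  fixes p t :: int
  assumes "prime p" "odd p" "\<not> p dvd t"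
  shows "coprime p (2*t)"
  using assms by (simp add: prime_imp_coprime)

lemma hensel_step:
  fixes p :: int
  assumes p: "prime p" "odd p" and t: "p^e dvd t^2 + D" "\<not> p dvd t" and "e \<ge> 1"
  shows "\<exists>t'. p^(Suc e) dvd t'^2 + D \<and> \<not> p dvd t'"
proof -
  obtain u where u: "t^2 + D = p^e * u"
    using t(1) by blast
  obtain x y where xy: "x * (2*t) + y * p = 1"
    using bezout_int[of "2*t" p] coprime_odd_prime_double[OF p t(2)]
    by (auto simp: coprime_commute coprime_iff_gcd_eq_1)
  \<comment> \<open>Newton step: t' = t + j p^e with j = -u x, where x inverts 2t modulo p.\<close>
  define t' where "t' = t - u * x * p^e"
  have "(t - u * x * q)^2 + D = q * (u * (1 - x * (2*t))) + (u * x)^2 * q^2"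
    if "t^2 + D = q * u" for q
    using that by (Groebner_Basis.algebra)
  then have "t'^2 + D = p^e * (u * (1 - x * (2*t))) + (u * x)^2 * (p^e)^2"
    using u unfolding t'_def by blast
  also have "1 - x * (2*t) = y * p"
    using xy by simp
  also have "p^e * (u * (y * p)) = p^(Suc e) * (u * y)"
    by (simp add: power_Suc2 ac_simps)
  finally have eq: "t'^2 + D = p^(Suc e) * (u * y) + (u * x)^2 * (p^e)^2" .
  have "Suc e \<le> e * 2"
    using assms(5) by simp
  then have "p^(Suc e) dvd (p^e)^2"
    unfolding power_mult[symmetric] by (rule le_imp_power_dvd)
  then have "p^(Suc e) dvd t'^2 + D"
    unfolding eq by (simp add: dvd_add dvd_mult)
  moreover have "\<not> p dvd t'"
  proof
    assume "p dvd t'"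
    moreover have "p dvd u * x * p^e"
      using assms(5) by (simp add: dvd_power)
    ultimately have "p dvd t' + u * x * p^e"
      by (rule dvd_add)
    then show False
      using t(2) by (simp add: t'_def)
  qed
  ultimately show ?thesis
    by blast
qed

lemma hensel_lift_root:
  fixes p :: int
  assumes p: "prime p" "odd p" and "p dvd t0^2 + D" "\<not> p dvd t0" and "e \<ge> 1"
  shows "\<exists>t. p^e dvd t^2 + D \<and> \<not> p dvd t"
  using \<open>e \<ge> 1\<close>
proof (induction e rule: dec_induct)
  case base
  then show ?case
    using assms(3,4) by auto
next
  case (step e)
  then show ?case
    using hensel_step[OF p] by blast
qed

lemma prime_power_dvd_sq_diff:
  fixes p :: int
  assumes p: "prime p" "odd p" and "\<not> p dvd r" and "p^e dvd t^2 - r^2"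
  shows "p^e dvd t - r \<or> p^e dvd t + r"
proof -
  have prod: "p^e dvd (t - r) * (t + r)"
    using assms(4) by (simp add: power2_eq_square algebra_simps)
  have "\<not> (p dvd t - r \<and> p dvd t + r)"
  proof
    assume "p dvd t - r \<and> p dvd t + r"
    then have "p dvd (t + r) - (t - r)"
      by (blast intro: dvd_diff)
    then have "p dvd 2 * r"
      by simp
    then show False
      using coprime_odd_prime_double[OF p assms(3)] p(1)
      by (meson coprime_common_divisor dvd_refl not_prime_unit)
  qed
  then have "coprime (p^e) (t - r) \<or> coprime (p^e) (t + r)"
    using p(1) by (auto simp: prime_imp_coprime)
  then show ?thesis
    using prod by (auto simp: coprime_dvd_mult_left_iff coprime_dvd_mult_right_iff)
qed

lemma diff_mem_roots_mod:
  assumes "r \<in> roots_mod D m" "r > 0"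
  shows "m - r \<in> roots_mod D m"
proof -
  have "[m - r = - r] (mod m)"
    by (simp add: cong_iff_dvd_diff)
  then show ?thesis
    using assms cong_dvd_sq_plus_iff[of "m - r" "-r" m D] by (simp add: roots_mod_def)
qed

lemma roots_mod_prime_power_subset:
  fixes p :: int
  assumes p: "prime p" "odd p" and r: "r \<in> roots_mod D (p^e)" "\<not> p dvd r"
  shows "roots_mod D (p^e) \<subseteq> {r, p^e - r}"
proof
  fix t assume t: "t \<in> roots_mod D (p^e)"
  have "p^e dvd (t^2 + D) - (r^2 + D)"
    using t r unfolding roots_mod_def by (blast intro: dvd_diff)
  then have "p^e dvd t - r \<or> p^e dvd t + r"
    using prime_power_dvd_sq_diff[OF p r(2)] by simp
  then have "[t = r] (mod p^e) \<or> [t = p^e - r] (mod p^e)"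
  proof
    assume "p^e dvd t + r"
    then have "p^e dvd (t + r) - p^e"
      by (simp add: dvd_diff)
    then show ?thesis
      by (simp add: cong_iff_dvd_diff algebra_simps)
  qed (simp add: cong_iff_dvd_diff)
  moreover have "r \<noteq> 0"
    using r(2) by auto
  then have "0 \<le> p^e - r" "p^e - r < p^e"
    using r(1) by (auto simp: roots_mod_def)
  ultimately show "t \<in> {r, p^e - r}"
    using t r(1) cong_less_imp_eq_int[of t "p^e"] by (auto simp: roots_mod_def)
qed

lemma ex_root_mod_prime_power:
  fixes p :: int
  assumes p: "prime p" "odd p" and "\<not> p dvd D" "\<exists>x. p dvd x^2 + D" "e \<ge> 1"
  obtains r where "r \<in> roots_mod D (p^e)" "\<not> p dvd r"
proof -
  obtain x where x: "p dvd x^2 + D"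
    using assms(4) by blast
  have "\<not> p dvd x"
  proof
    assume "p dvd x"
    then have "p dvd x^2"
      by (simp add: power2_eq_square)
    then show False
      using x assms(3) by (simp add: dvd_add_right_iff)
  qed
  then obtain t where t: "p^e dvd t^2 + D" "\<not> p dvd t"
    using hensel_lift_root[OF p x _ assms(5)] by blast
  have "p^e > 0"
    using p(1) by (simp add: prime_gt_0_int)
  then have root: "t mod p^e \<in> roots_mod D (p^e)"
    using t(1) by (rule mod_mem_roots_mod)
  have "[t mod p^e = t] (mod p^e)"
    by (simp add: cong_def)
  then have "[t mod p^e = t] (mod p)"
    by (rule cong_dvd_modulus) (use assms(5) in \<open>simp add: dvd_power\<close>)
  then have "\<not> p dvd t mod p^e"
    using cong_dvd_iff t(2) by blast
  with root show ?thesis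
    by (rule that)
qed

lemma card_roots_mod_prime_power:
  fixes p :: int
  assumes p: "prime p" "odd p" and "\<not> p dvd D" "\<exists>x. p dvd x^2 + D" "e \<ge> 1"
  shows "card (roots_mod D (p^e)) = 2"
proof -
  obtain r where r: "r \<in> roots_mod D (p^e)" "\<not> p dvd r"
    by (rule ex_root_mod_prime_power[OF assms])
  then have "r > 0"
    by (cases "r = 0") (auto simp: roots_mod_def)
  have "r \<noteq> p^e - r"
  proof
    assume "r = p^e - r"
    then have "2 * r = p^e"
      by simp
    moreover have "p dvd p^e"
      using assms(5) by (simp add: dvd_power)
    ultimately have "p dvd 2 * r"
      by simp
    then show False
      using coprime_odd_prime_double[OF p r(2)] p(1)
      by (meson coprime_common_divisor dvd_refl not_prime_unit)
  qed
  have "roots_mod D (p^e) = {r, p^e - r}"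
    using roots_mod_prime_power_subset[OF p r] r(1) diff_mem_roots_mod[OF r(1) \<open>r > 0\<close>]
    by blast
  then show ?thesis
    using \<open>r \<noteq> p^e - r\<close> by simp
qed

lemma chinese_remainder_roots_mod:
  assumes "m1 > 0" "m2 > 0" "coprime m1 m2" "r1 \<in> roots_mod D m1" "r2 \<in> roots_mod D m2"
  obtains t where "t \<in> roots_mod D (m1 * m2)" "t mod m1 = r1" "t mod m2 = r2"
proof -
  obtain x where x: "[x = r1] (mod m1)" "[x = r2] (mod m2)"
    using binary_chinese_remainder_int[OF assms(3)] by blast
  define t where "t = x mod (m1 * m2)"
  have cong: "[t = r1] (mod m1)" "[t = r2] (mod m2)"
    using x by (simp_all add: t_def cong_def mod_mod_cancel)
  then have "t mod m1 = r1" "t mod m2 = r2"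
    using assms(4,5) by (simp_all add: roots_mod_def cong_def)
  moreover have "m1 dvd t^2 + D" "m2 dvd t^2 + D"
    using assms(4,5) cong_dvd_sq_plus_iff[OF cong(1)] cong_dvd_sq_plus_iff[OF cong(2)]
    by (simp_all add: roots_mod_def)
  then have "t \<in> roots_mod D (m1 * m2)"
    using assms(1-3) by (simp add: roots_mod_def t_def divides_mult)
  ultimately show ?thesis
    using that by blast
qed

lemma card_roots_mod_mult:
  assumes "m1 > 0" "m2 > 0" "coprime m1 m2"
  shows "card (roots_mod D (m1 * m2)) = card (roots_mod D m1) * card (roots_mod D m2)"
proof -
  let ?f = "\<lambda>t. (t mod m1, t mod m2)"
  have "inj_on ?f (roots_mod D (m1 * m2))"
  proof (rule inj_onI)
    fix t t' assume t: "t \<in> roots_mod D (m1 * m2)" "t' \<in> roots_mod D (m1 * m2)"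
      and eq: "?f t = ?f t'"
    have "[t = t'] (mod m1 * m2)"
      by (rule coprime_cong_mult) (use eq assms(3) in \<open>auto simp: cong_def\<close>)
    then show "t = t'"
      using cong_less_imp_eq_int[of t "m1 * m2" t'] t by (simp add: roots_mod_def)
  qed
  moreover have "?f ` roots_mod D (m1 * m2) = roots_mod D m1 \<times> roots_mod D m2"
  proof
    show "?f ` roots_mod D (m1 * m2) \<subseteq> roots_mod D m1 \<times> roots_mod D m2"
    proof (rule image_subsetI)
      fix t assume "t \<in> roots_mod D (m1 * m2)"
      then have "m1 * m2 dvd t^2 + D"
        by (simp add: roots_mod_def)
      then have "m1 dvd t^2 + D" "m2 dvd t^2 + D"
        using dvd_mult_left dvd_mult_right by blast+
      then show "?f t \<in> roots_mod D m1 \<times> roots_mod D m2"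
        using assms(1,2) by (simp add: mod_mem_roots_mod)
    qed
  next
    show "roots_mod D m1 \<times> roots_mod D m2 \<subseteq> ?f ` roots_mod D (m1 * m2)"
    proof clarify
      fix r1 r2 assume "r1 \<in> roots_mod D m1" "r2 \<in> roots_mod D m2"
      then obtain t where "t \<in> roots_mod D (m1 * m2)" "t mod m1 = r1" "t mod m2 = r2"
        by (rule chinese_remainder_roots_mod[OF assms])
      then show "(r1, r2) \<in> ?f ` roots_mod D (m1 * m2)"
        by force
    qed
  qed
  ultimately have "bij_betw ?f (roots_mod D (m1 * m2)) (roots_mod D m1 \<times> roots_mod D m2)"
    by (rule bij_betw_imageI)
  then show ?thesis
    by (simp add: bij_betw_same_card card_cartesian_product)
qed

lemma split_prime_power_factor:
  fixes c p :: nat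
  assumes "prime p" "p dvd c" "c > 0"
  obtains k y where "c = p ^ k * y" "k \<ge> 1" "\<not> p dvd y" "y > 0" "y < c"
    "prime_factors c = insert p (prime_factors y)" "p \<notin> prime_factors y"
proof -
  define k where "k = multiplicity p c"
  obtain y where y: "c = p ^ k * y" "\<not> p dvd y"
    using multiplicity_decompose'[of c p] assms unfolding k_def by (metis not_prime_unit neq0_conv)
  have "k \<ge> 1"
  proof (rule ccontr)
    assume "\<not> k \<ge> 1"
    then have "c = y"
      using y(1) by simp
    then show False
      using assms(2) y(2) by simp
  qed
  have "y > 0"
    using y(1) assms(3) by (cases "y = 0") auto
  have "p^k > 1"
    using prime_gt_1_nat[OF assms(1)] \<open>k \<ge> 1\<close> by (intro one_less_power) auto
  then have "y < c"
    using mult_less_mono1[OF _ \<open>y > 0\<close>, of 1 "p^k"] y(1) by simp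
  have "prime_factors c = insert p (prime_factors y)" "p \<notin> prime_factors y"
    using y assms(1) \<open>k \<ge> 1\<close> \<open>y > 0\<close>
    by (simp_all add: prime_factors_product prime_factorization_prime_power in_prime_factors_iff)
  then show ?thesis
    using that y \<open>k \<ge> 1\<close> \<open>y > 0\<close> \<open>y < c\<close> by blast
qed

lemma card_roots_mod_square:
  fixes c :: nat
  assumes "c > 0"
    and "\<forall>p\<in>prime_factors c. odd p \<and> \<not> int p dvd D \<and> (\<exists>x. int p dvd x^2 + D)"
  shows "card (roots_mod D (int c ^ 2)) = 2 ^ card (prime_factors c)"
  using assms
proof (induction c rule: less_induct)
  case (less c)
  show ?case
  proof (cases "c = 1")
    case True
    have "roots_mod D 1 = {0}"
      by (auto simp: roots_mod_def)
    then show ?thesis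
      using True by simp
  next
    case False
    then obtain p where p: "prime p" "p dvd c"
      using prime_factor_nat by blast
    then obtain k y where y: "c = p ^ k * y" "k \<ge> 1" "\<not> p dvd y" "y > 0" "y < c"
      and factors: "prime_factors c = insert p (prime_factors y)" "p \<notin> prime_factors y"
      using less.prems(1) by (rule split_prime_power_factor)
    have IH: "card (roots_mod D (int y ^ 2)) = 2 ^ card (prime_factors y)"
      using less.IH[OF y(5,4)] less.prems(2) factors(1) by blast
    have "card (roots_mod D (int p ^ (2*k))) = 2"
      using less.prems(2) factors(1) p(1) y(2) by (intro card_roots_mod_prime_power) auto
    moreover have "coprime (int p ^ (2*k)) (int y ^ 2)"
      using p(1) y(3) by (simp add: prime_imp_coprime)
    moreover have "int c ^ 2 = int p ^ (2*k) * int y ^ 2"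
      using y(1) by (simp add: power_mult_distrib power_mult[symmetric] mult.commute)
    ultimately have "card (roots_mod D (int c ^ 2)) = 2 * card (roots_mod D (int y ^ 2))"
      using card_roots_mod_mult p(1) y(4) by (simp add: prime_gt_0_nat)
    then show ?thesis
      using IH factors by simp
  qed
qed

section \<open>Representations of c^2 and normalized solutions\<close>

lemma coprime_snd_of_primitive_rep:
  fixes x y C :: int
  assumes "x^2 + D*y^2 = C^2" "coprime x y"
  shows "coprime y C"
proof (rule coprimeI)
  fix d assume d: "d dvd y" "d dvd C"
  then have "d^2 dvd C^2" "d^2 dvd D*y^2"
    by (simp_all add: dvd_power_same)
  then have "d^2 dvd x^2"
    using assms(1) by (metis add_diff_cancel_right' dvd_diff)
  then have "d dvd x"
    by simp
  then show "is_unit d"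
    using assms(2) d(1) coprime_common_divisor by blast
qed

lemma coprime_of_sq_dvd_squarefree:
  fixes C t :: int
  assumes "squarefree D" "C^2 dvd t^2 + D"
  shows "coprime C t"
proof (rule coprimeI)
  fix d assume "d dvd C" "d dvd t"
  then have "d^2 dvd (t^2 + D) - t^2"
    using assms(2) by (meson dvd_diff dvd_power_same dvd_trans)
  then show "is_unit d"
    using assms(1) unfolding squarefree_def by simp
qed

definition root_of_rep :: "int \<Rightarrow> int \<times> int \<Rightarrow> int" where
  "root_of_rep m z = (THE t. 0 \<le> t \<and> t < m \<and> m dvd fst z + t * snd z)"

lemma ex1_root_of_rep:
  fixes m x y :: int
  assumes "m > 0" "coprime y m"
  shows "\<exists>!t. 0 \<le> t \<and> t < m \<and> m dvd x + t * y"
proof -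
  obtain u v where uv: "u * y + v * m = 1"
    using bezout_int[of y m] assms(2) by (auto simp: coprime_iff_gcd_eq_1)
  define t where "t = (- x * u) mod m"
  have "x + (- x * u) * y = m * (x * v)"
    using uv by (Groebner_Basis.algebra)
  moreover have "[x + t * y = x + (- x * u) * y] (mod m)"
    unfolding t_def by (intro cong_add cong_mult) (simp_all add: cong_def)
  ultimately have "m dvd x + t * y"
    by (simp add: cong_dvd_iff)
  moreover have "0 \<le> t" "t < m"
    using assms(1) by (simp_all add: t_def)
  moreover have "t' = t" if "0 \<le> t'" "t' < m" "m dvd x + t' * y" for t'
  proof -
    have "m dvd (x + t' * y) - (x + t * y)"
      using that(3) \<open>m dvd x + t * y\<close> by (rule dvd_diff)
    then have "m dvd (t' - t) * y"
      by (simp add: algebra_simps)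
    then have "[t' = t] (mod m)"
      using assms(2) by (simp add: cong_iff_dvd_diff coprime_commute coprime_dvd_mult_left_iff)
    then show ?thesis
      using that assms(1) by (simp add: t_def cong_less_imp_eq_int)
  qed
  ultimately show ?thesis
    by (intro ex1I[of _ t]) blast+
qed

lemma root_of_rep_root:
  fixes m x y :: int
  assumes "m > 0" "coprime y m"
  shows "0 \<le> root_of_rep m (x, y) \<and> root_of_rep m (x, y) < m \<and> m dvd x + root_of_rep m (x, y) * y"
  using theI'[OF ex1_root_of_rep[OF assms]] by (simp add: root_of_rep_def)

lemma root_of_rep_eqI:
  fixes m x y t :: int
  assumes "m > 0" "coprime y m" "0 \<le> t" "t < m" "m dvd x + t * y"
  shows "root_of_rep m (x, y) = t"
  using the1_equality[OF ex1_root_of_rep[OF assms(1,2)]] assms(3-5) by (simp add: root_of_rep_def)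

\<comment> \<open>If both representations have the same root, m divides x y' - x' y; the norm identity
  m^2 = (x x' + D y y')^2 + D (x y' - x' y)^2 then forces x y' = x' y.\<close>
lemma primitive_rep_eq_of_same_root:
  fixes D m x y x' y' t :: int
  assumes "D > 1"
    and rep: "x^2 + D*y^2 = m" "coprime x y" "y > 0" "m dvd x + t*y"
    and rep': "x'^2 + D*y'^2 = m" "coprime x' y'" "y' > 0" "m dvd x' + t*y'"
  shows "x = x' \<and> y = y'"
proof -
  define d where "d = x*y' - x'*y"
  have "d = (x + t*y) * y' - (x' + t*y') * y"
    by (simp add: d_def algebra_simps)
  then have "m dvd d"
    using rep(4) rep'(4) by (simp add: dvd_diff)
  have "(x*x' + D*y*y')^2 + D*d^2 = (x^2 + D*y^2) * (x'^2 + D*y'^2)"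
    by (simp add: d_def power2_eq_square algebra_simps)
  then have bound: "D * d^2 \<le> m * m"
    using rep(1) rep'(1) by (metis le_add_same_cancel2 zero_le_power2)
  have "d = 0"
  proof (rule ccontr)
    assume "d \<noteq> 0"
    have "m > 0"
      using rep(1,3) assms(1) by (smt (verit) mult_pos_pos zero_le_power2 zero_less_power)
    then have "m \<le> \<bar>d\<bar>"
      using dvd_imp_le_int[OF \<open>d \<noteq> 0\<close> \<open>m dvd d\<close>] by simp
    then have "m * m \<le> d^2"
      using \<open>m > 0\<close> by (metis abs_mult_self_eq mult_mono' less_imp_le power2_eq_square)
    moreover have "d^2 < D * d^2"
      using assms(1) \<open>d \<noteq> 0\<close> by simp
    ultimately show False
      using bound by linarith
  qed
  then have cross: "x * y' = x' * y"
    by (simp add: d_def)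
  then have "y dvd y'" "y' dvd y"
    using rep(2) rep'(2)
    by (metis coprime_commute coprime_dvd_mult_right_iff dvd_triv_right)+
  then have "y = y'"
    using rep(3) rep'(3) by (simp add: zdvd_antisym_nonneg)
  then show ?thesis
    using cross rep(3) by simp
qed

lemma root_of_rep_mem_roots_mod:
  fixes m x y :: int
  assumes "m > 0" "x^2 + D*y^2 = m" "coprime y m"
  shows "root_of_rep m (x, y) \<in> roots_mod D m"
proof -
  let ?t = "root_of_rep m (x, y)"
  have t: "0 \<le> ?t" "?t < m" "m dvd x + ?t * y"
    using root_of_rep_root[OF assms(1,3)] by auto
  have "y^2 * (?t^2 + D) = (?t*y - x) * (?t*y + x) + (x^2 + D*y^2)"
    by (simp add: power2_eq_square algebra_simps)
  then have "m dvd y^2 * (?t^2 + D)"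
    using t(3) assms(2) by (simp add: add.commute)
  then have "m dvd ?t^2 + D"
    using assms(3) by (simp add: coprime_commute coprime_dvd_mult_right_iff)
  then show ?thesis
    using t by (simp add: roots_mod_def)
qed

lemma primitive_rep_of_root:
  fixes c t :: int
  assumes "D > 0" "squarefree D" "\<exists>n. form_class_group (-4*D) \<cong> Z2_power n"
    and "c > 1" "odd c" "t \<in> roots_mod D (c^2)"
  obtains x y where "x^2 + D*y^2 = c^2" "coprime x y" "y > 0" "c^2 dvd x + t*y"
proof -
  have t: "c^2 dvd t^2 + D"
    using assms(6) by (simp add: roots_mod_def)
  have "coprime c (2*t)"
    using coprime_of_sq_dvd_squarefree[OF assms(2) t] assms(5) by simp
  then obtain x y where xy: "x^2 + D*y^2 = c^2" "coprime x y" "c^2 dvd x + t*y"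
    using primitive_rep_of_sq_root[OF assms(1,3) _ t] assms(4) by auto
  have "y \<noteq> 0"
  proof
    assume "y = 0"
    then have "\<bar>x\<bar> = 1" "x^2 = c^2"
      using xy(1,2) by auto
    then have "c^2 = 1"
      by (metis power2_abs power_one)
    moreover have "c^2 > 1"
      using assms(4) by (simp add: one_less_power)
    ultimately show False
      by simp
  qed
  show ?thesis
  proof (cases "y > 0")
    case True
    then show ?thesis
      using that xy by blast
  next
    case False
    have "c^2 dvd - (x + t*y)"
      using xy(3) by (simp only: dvd_minus_iff)
    then have "c^2 dvd (-x) + t * (-y)"
      by simp
    then show ?thesis
      using that[of "-x" "-y"] xy \<open>y \<noteq> 0\<close> False by simp
  qed
qed

definition primitive_reps :: "int \<Rightarrow> int \<Rightarrow> (int \<times> int) set" where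
  "primitive_reps D m = {(x, y). x^2 + D*y^2 = m \<and> coprime x y \<and> y > 0}"

lemma coprime_snd_primitive_reps: "(x, y) \<in> primitive_reps D (c^2) \<Longrightarrow> coprime y (c^2)"
  using coprime_snd_of_primitive_rep[of x D y c] by (simp add: primitive_reps_def)

lemma inj_on_root_of_rep:
  fixes c :: int
  assumes "D > 1" "c \<noteq> 0"
  shows "inj_on (root_of_rep (c^2)) (primitive_reps D (c^2))"
proof (rule inj_onI)
  fix z z' assume R: "z \<in> primitive_reps D (c^2)" "z' \<in> primitive_reps D (c^2)"
    and eq: "root_of_rep (c^2) z = root_of_rep (c^2) z'"
  obtain x y where z: "z = (x, y)"
    by (cases z)
  obtain x' y' where z': "z' = (x', y')"
    by (cases z')
  have m: "c^2 > 0"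
    using assms(2) by simp
  have R': "(x, y) \<in> primitive_reps D (c^2)" "(x', y') \<in> primitive_reps D (c^2)"
    using R by (simp_all add: z z')
  define t where "t = root_of_rep (c^2) (x, y)"
  have "c^2 dvd x + t * y"
    using root_of_rep_root[OF m coprime_snd_primitive_reps[OF R'(1)], where x = x] by (simp add: t_def)
  moreover have "c^2 dvd x' + t * y'"
    using root_of_rep_root[OF m coprime_snd_primitive_reps[OF R'(2)], where x = x'] eq
    by (simp add: z z' t_def)
  ultimately have "x = x' \<and> y = y'"
    using primitive_rep_eq_of_same_root[OF assms(1), of x y "c^2" t x' y'] R'
    by (simp add: primitive_reps_def)
  then show "z = z'"
    by (simp add: z z')
qed

lemma image_root_of_rep:
  fixes c :: int
  assumes "D > 1" "squarefree D" "\<exists>n. form_class_group (-4*D) \<cong> Z2_power n" "c > 1" "odd c"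
  shows "root_of_rep (c^2) ` primitive_reps D (c^2) = roots_mod D (c^2)"
proof
  have m: "c^2 > 0"
    using assms(4) by simp
  show "root_of_rep (c^2) ` primitive_reps D (c^2) \<subseteq> roots_mod D (c^2)"
  proof (rule image_subsetI)
    fix z assume R: "z \<in> primitive_reps D (c^2)"
    obtain x y where z: "z = (x, y)"
      by (cases z)
    have "x^2 + D*y^2 = c^2" "coprime y (c^2)"
      using R coprime_snd_primitive_reps[of x y D c] by (simp_all add: z primitive_reps_def)
    then show "root_of_rep (c^2) z \<in> roots_mod D (c^2)"
      unfolding z by (rule root_of_rep_mem_roots_mod[OF m])
  qed
  show "roots_mod D (c^2) \<subseteq> root_of_rep (c^2) ` primitive_reps D (c^2)"
  proof
    fix t assume t: "t \<in> roots_mod D (c^2)"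
    obtain x y where xy: "x^2 + D*y^2 = c^2" "coprime x y" "y > 0" "c^2 dvd x + t*y"
      using primitive_rep_of_root[OF _ assms(2-5) t] assms(1) by auto
    then have R: "(x, y) \<in> primitive_reps D (c^2)"
      by (simp add: primitive_reps_def)
    have "root_of_rep (c^2) (x, y) = t"
      using t xy(4) by (intro root_of_rep_eqI[OF m coprime_snd_primitive_reps[OF R]])
        (simp_all add: roots_mod_def)
    then show "t \<in> root_of_rep (c^2) ` primitive_reps D (c^2)"
      using R by force
  qed
qed

lemma card_primitive_reps:
  fixes c :: int
  assumes "D > 1" "squarefree D" "\<exists>n. form_class_group (-4*D) \<cong> Z2_power n" "c > 1" "odd c"
  shows "card (primitive_reps D (c^2)) = card (roots_mod D (c^2))"
proof -
  have "c \<noteq> 0"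
    using assms(4) by simp
  then have "bij_betw (root_of_rep (c^2)) (primitive_reps D (c^2)) (roots_mod D (c^2))"
    using inj_on_root_of_rep[OF assms(1)] image_root_of_rep[OF assms] by (intro bij_betw_imageI)
  then show ?thesis
    by (rule bij_betw_same_card)
qed

lemma gcd3_eq_1_iff_coprime:
  fixes a b c :: nat
  assumes "int a ^ 2 + D * int b ^ 2 = int c ^ 2"
  shows "gcd a (gcd b c) = 1 \<longleftrightarrow> coprime a b"
proof
  assume gcd3: "gcd a (gcd b c) = 1"
  show "coprime a b"
  proof (rule coprimeI)
    fix d assume d: "d dvd a" "d dvd b"
    then have "int d ^ 2 dvd int c ^ 2"
      unfolding assms[symmetric] by (simp add: dvd_add)
    then have "d dvd c"
      by (metis int_dvd_int_iff of_nat_power pow_divides_pow_iff zero_less_numeral)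
    then show "is_unit d"
      using d gcd3 by (metis gcd_greatest is_unit_gcd)
  qed
next
  assume "coprime a b"
  then show "gcd a (gcd b c) = 1"
    by (simp add: gcd.assoc[symmetric])
qed

lemma normalized_sol_iff:
  "normalized_sol D a b c \<longleftrightarrow>
    a > 0 \<and> b > 0 \<and> c > 0 \<and> int a ^ 2 + D * int b ^ 2 = int c ^ 2 \<and> coprime a b"
  using gcd3_eq_1_iff_coprime[of a D b c] unfolding normalized_sol_def by auto

lemma primitive_reps_fst_nonzero:
  assumes "squarefree D" "c > 1" "(x, y) \<in> primitive_reps D (int c ^ 2)"
  shows "x \<noteq> 0"
proof
  assume "x = 0"
  then have "D * y^2 = (int c)^2" "\<bar>y\<bar> = 1" "y > 0"
    using assms(3) by (simp_all add: primitive_reps_def)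
  then have "y = 1"
    by linarith
  then have "(int c)^2 dvd D"
    using \<open>D * y^2 = (int c)^2\<close> by simp
  then have "is_unit (int c)"
    using assms(1) unfolding squarefree_def by blast
  then show False
    using assms(2) by simp
qed

lemma card_primitive_reps_eq_double:
  fixes c :: nat
  assumes "squarefree D" "c > 1"
  shows "card (primitive_reps D (int c ^ 2)) = 2 * card {(a, b). normalized_sol D a b c}"
proof -
  let ?Sol = "{(a, b). normalized_sol D a b c}" and ?R = "primitive_reps D (int c ^ 2)"
  define g where "g = (\<lambda>((a::nat, b::nat), s::bool). (if s then int a else - int a, int b))"
  have "inj_on g (?Sol \<times> UNIV)"
    by (rule inj_onI) (auto simp: g_def normalized_sol_def split: if_splits)
  moreover have "g ` (?Sol \<times> UNIV) = ?R"
  proof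
    show "g ` (?Sol \<times> UNIV) \<subseteq> ?R"
      by (auto simp: g_def normalized_sol_iff primitive_reps_def split: if_splits)
    show "?R \<subseteq> g ` (?Sol \<times> UNIV)"
    proof clarify
      fix x y assume R: "(x, y) \<in> ?R"
      then have "normalized_sol D (nat \<bar>x\<bar>) (nat y) c"
        using primitive_reps_fst_nonzero[OF assms R] assms(2)
        by (auto simp: normalized_sol_iff primitive_reps_def)
      then have "((nat \<bar>x\<bar>, nat y), x > 0) \<in> ?Sol \<times> UNIV"
        by simp
      moreover have "(x, y) = g ((nat \<bar>x\<bar>, nat y), x > 0)"
        using R by (simp add: g_def primitive_reps_def)
      ultimately show "(x, y) \<in> g ` (?Sol \<times> UNIV)"
        by (rule rev_image_eqI)
    qed
  qed
  ultimately have "bij_betw g (?Sol \<times> UNIV) ?R"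
    by (rule bij_betw_imageI)
  then have "card (?Sol \<times> (UNIV :: bool set)) = card ?R"
    by (rule bij_betw_same_card)
  then show ?thesis
    by (simp add: card_cartesian_product)
qed

section \<open>Prime factors of c\<close>

lemma S_set_iff:
  "p \<in> S_set D \<longleftrightarrow> prime p \<and> odd p \<and> \<not> int p dvd D \<and> (\<exists>x. int p dvd x^2 + D)"
proof -
  have "[x^2 = -D] (mod int p) \<longleftrightarrow> int p dvd x^2 + D" for x
    by (simp add: cong_iff_dvd_diff)
  then show ?thesis
    by (auto simp: S_set_def Legendre_def QuadRes_def cong_0_iff)
qed

lemma normalized_sol_prime_not_dvd_snd:
  assumes sol: "normalized_sol D a b c" and p: "prime p" "p dvd c"
  shows "\<not> p dvd b"
proof
  assume "p dvd b"
  have eq: "int a ^ 2 = int c ^ 2 - D * int b ^ 2" and gcd3: "gcd a (gcd b c) = 1"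
    using sol by (simp_all add: normalized_sol_def algebra_simps)
  have "int p dvd int c ^ 2"
    using p(2) by (simp add: power2_eq_square)
  moreover have "int p dvd D * int b ^ 2"
    using \<open>p dvd b\<close> by (simp add: power2_eq_square dvd_mult dvd_mult2)
  ultimately have "int p dvd int a ^ 2"
    unfolding eq by (rule dvd_diff)
  then have "int p dvd int a"
    by (rule prime_dvd_power[OF prime_nat_int_transfer[THEN iffD2, OF p(1)]])
  then have "p dvd gcd a (gcd b c)"
    using \<open>p dvd b\<close> p(2) by simp
  then show False
    using gcd3 p(1) by simp
qed

lemma normalized_sol_prime_not_dvd_coeff:
  assumes sol: "normalized_sol D a b c" and p: "prime p" "p dvd c" and "squarefree D"
  shows "\<not> int p dvd D"
proof
  assume "int p dvd D"
  have eq: "int c ^ 2 - int a ^ 2 = D * int b ^ 2"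
    using sol by (simp add: normalized_sol_def algebra_simps)
  have "int p dvd int c ^ 2 - D * int b ^ 2"
    using p(2) \<open>int p dvd D\<close> by (intro dvd_diff) (simp_all add: power2_eq_square dvd_mult2)
  then have "int p dvd int a ^ 2"
    using eq by (simp add: algebra_simps)
  then have "int p dvd int a"
    by (rule prime_dvd_power[OF prime_nat_int_transfer[THEN iffD2, OF p(1)]])
  then have "int p ^ 2 dvd D * int b ^ 2"
    unfolding eq[symmetric] using p(2) by (simp add: dvd_diff)
  moreover have "coprime (int p ^ 2) (int b ^ 2)"
    using normalized_sol_prime_not_dvd_snd[OF sol p] p(1) prime_imp_coprime[of "int p" "int b"]
    by simp
  ultimately have "int p ^ 2 dvd D"
    by (simp add: coprime_dvd_mult_left_iff)
  then have "is_unit (int p)"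
    using \<open>squarefree D\<close> unfolding squarefree_def by blast
  then show False
    using p(1) not_prime_unit by simp
qed

\<comment> \<open>For even c, b is odd and a^2 + D \<equiv> 0 (mod 4), impossible when -D \<equiv> 2, 3 (mod 4).\<close>
lemma normalized_sol_odd:
  assumes "(- D) mod 4 = 2 \<or> (- D) mod 4 = 3" and sol: "normalized_sol D a b c"
  shows "odd c"
proof
  assume "even c"
  have eq: "int a ^ 2 + D * int b ^ 2 = int c ^ 2"
    using sol by (simp add: normalized_sol_def)
  have "odd b"
    using normalized_sol_prime_not_dvd_snd[OF sol two_is_prime_nat \<open>even c\<close>] by simp
  then obtain j where j: "int b = 2 * j + 1"
    by (metis odd_two_times_div_two_succ of_nat_numeral of_nat_mult of_nat_add of_nat_1)
  obtain l where l: "int c = 2 * l"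
    using \<open>even c\<close> by (metis evenE of_nat_mult of_nat_numeral)
  have sum: "int a ^ 2 + D + 4 * (D * (j^2 + j)) = 4 * l^2"
    using eq j l by (simp add: power2_eq_square algebra_simps)
  obtain i where "int a = 2 * i \<or> int a = 2 * i + 1"
    by (metis odd_two_times_div_two_succ dvd_mult_div_cancel)
  then have square: "int a ^ 2 = 4 * i^2 \<or> int a ^ 2 = 4 * (i^2 + i) + 1"
    by (auto simp: power2_eq_square algebra_simps)
  have impossible: "A + D + 4 * w = 4 * v \<Longrightarrow> A = 4 * u \<or> A = 4 * u' + 1 \<Longrightarrow> False"
    for A w v u u' :: int
    using assms(1) by presburger
  show False
    by (rule impossible[OF sum square])
qed

lemma normalized_sol_prime_QuadRes:
  assumes sol: "normalized_sol D a b c" and "prime p" "p dvd c" "\<not> p dvd b"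
  shows "\<exists>x. int p dvd x^2 + D"
proof -
  have "prime (int p)" "\<not> int p dvd int b"
    using assms(2,4) by simp_all
  then have "gcd (int p) (int b) = 1"
    by (intro coprime_imp_gcd_eq_1 prime_imp_coprime)
  then obtain v u where uv: "v * int p + u * int b = 1"
    using bezout_int[of "int p" "int b"] by metis
  have eq: "int a ^ 2 + D * int b ^ 2 = int c ^ 2"
    using sol by (simp add: normalized_sol_def)
  have "(int a * u)^2 + D = u^2 * int c ^ 2 + int p * (D * v * (1 + u * int b))"
    using eq uv by (Groebner_Basis.algebra)
  moreover have "int p dvd u^2 * int c ^ 2"
    using assms(3) by (simp add: power2_eq_square)
  ultimately have "int p dvd (int a * u)^2 + D"
    by (simp add: dvd_add)
  then show ?thesis
    by blast
qed

lemma prime_factor_of_normalized_sol_in_S_set: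
  assumes "squarefree D" "(- D) mod 4 = 2 \<or> (- D) mod 4 = 3"
    and sol: "normalized_sol D a b c" and p: "p \<in> prime_factors c"
  shows "p \<in> S_set D"
proof -
  have p': "prime p" "p dvd c"
    using p by auto
  have "odd p"
    using normalized_sol_odd[OF assms(2) sol] p'(2) dvd_trans by blast
  then show ?thesis
    unfolding S_set_iff
    using p' normalized_sol_prime_not_dvd_coeff[OF sol p' assms(1)]
      normalized_sol_prime_QuadRes[OF sol p' normalized_sol_prime_not_dvd_snd[OF sol p']] by blast
qed

lemma card_prime_factors_pos:
  fixes c :: nat
  assumes "c > 1"
  shows "card (prime_factors c) > 0"
proof -
  obtain p where "prime p" "p dvd c"
    using prime_factor_nat[of c] assms by auto
  then have "p \<in> prime_factors c"
    using assms by (simp add: in_prime_factors_iff)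
  then show ?thesis
    by (auto simp: card_gt_0_iff)
qed

lemma card_normalized_sol:
  assumes "D > 1" "squarefree D" "\<exists>n. form_class_group (-4*D) \<cong> Z2_power n"
    and "c > 1" and S: "\<forall>p\<in>prime_factors c. p \<in> S_set D"
  shows "card {(a, b). normalized_sol D a b c} = 2 ^ (card (prime_factors c) - 1)"
proof -
  have "odd c"
  proof
    assume "even c"
    then have "2 \<in> prime_factors c"
      using assms(4) by (simp add: in_prime_factors_iff)
    then show False
      using S by (auto simp: S_set_def)
  qed
  have "2 ^ card (prime_factors c) = card (roots_mod D (int c ^ 2))"
    using S assms(4) by (intro card_roots_mod_square[symmetric]) (auto simp: S_set_iff)
  also have "\<dots> = card (primitive_reps D (int c ^ 2))"
    by (rule card_primitive_reps[OF assms(1-3), symmetric]) (use \<open>odd c\<close> assms(4) in simp_all)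
  also have "\<dots> = 2 * card {(a, b). normalized_sol D a b c}"
    by (rule card_primitive_reps_eq_double[OF assms(2,4)])
  finally show ?thesis
    using card_prime_factors_pos[OF assms(4)] by (cases "card (prime_factors c)") simp_all
qed

theorem theorem4p1:
  fixes D :: int and c :: nat
  assumes "D > 1"
    and "squarefree D"
    and "(- D) mod 4 = 2 \<or> (- D) mod 4 = 3"
    and "\<exists>n::nat. form_class_group (- 4 * D) \<cong> Z2_power n"
    and "c > 1"
  shows "((\<exists>a b. normalized_sol D a b c) \<longleftrightarrow> (\<forall>p\<in>prime_factors c. p \<in> S_set D))
       \<and> ((\<forall>p\<in>prime_factors c. p \<in> S_set D) \<longrightarrow>
            card {(a, b). normalized_sol D a b c} = 2 ^ (card (prime_factors c) - 1))"
proof -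
  have count: "card {(a, b). normalized_sol D a b c} = 2 ^ (card (prime_factors c) - 1)"
    if "\<forall>p\<in>prime_factors c. p \<in> S_set D"
    using card_normalized_sol[OF assms(1,2,4,5) that] .
  moreover have "(\<exists>a b. normalized_sol D a b c) \<longleftrightarrow> (\<forall>p\<in>prime_factors c. p \<in> S_set D)"
  proof
    assume "\<exists>a b. normalized_sol D a b c"
    then show "\<forall>p\<in>prime_factors c. p \<in> S_set D"
      using prime_factor_of_normalized_sol_in_S_set[OF assms(2,3)] by blast
  next
    assume "\<forall>p\<in>prime_factors c. p \<in> S_set D"
    then have "{(a, b). normalized_sol D a b c} \<noteq> {}"
      using count by fastforce
    then show "\<exists>a b. normalized_sol D a b c"
      by blast
  qed
  ultimately show ?thesis
    by blast
qed

end
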